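(* Let $n\in\mathbb N$, let $\psi\colon\mathbb R\to\mathbb R$ be a $C^n$ function whose $n$-th derivative $\psi^{(n)}$ is not identically zero, and let $p\colon\mathbb R^m\to\mathbb R^r$ be a polynomial map of degree at most $n$. Let $\mathcal A=(d_0,\dots,d_k,\psi)$ be a neural network architecture with $d_0=m$, $d_k=r$ and activation function $\psi$, such that there is a hidden layer $0<i<k$ with $d_i\ge r\left(\binom{n+m}{m}-m\right)$, $\min(d_0,\dots,d_{i-1})\ge d_0$, and $\min(d_{i+1},\dots,d_k)\ge d_k$. Then $p$ can be approximated uniformly on compact subsets of $\mathbb R^m$ by responses $\mathcal N^{\mathcal A}_\theta$, $\theta\in\mathbb R^{d(\mathcal A)}$; that is, there is a sequence $(\theta_j)$ in $\mathbb R^{d(\mathcal A)}$ with $\mathcal N^{\mathcal A}_{\theta_j}\to p$ uniformly on compact sets.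
   Context: A neural network architecture is $\mathcal A=(d_0,\dots,d_k,\psi)$ with positive integers $d_i$ and $\psi\colon\mathbb R\to\mathbb R$; $d(\mathcal A)=\sum_{i=1}^kd_i(d_{i-1}+1)$; $\theta\in\mathbb R^{d(\mathcal A)}$ is identified with $(W_1,b_1,\dots,W_k,b_k)$, $W_i\in\mathbb R^{d_i\times d_{i-1}},b_i\in\mathbb R^{d_i}$; the response is $\mathcal N^{\mathcal A}_\theta=f_k\circ\dots\circ f_1\colon\mathbb R^{d_0}\to\mathbb R^{d_k}$ with $f_i(x)=\psi^{(d_i)}(W_ix+b_i)$ for $i<k$ ($\psi$ applied componentwise) and $f_k(x)=W_kx+b_k$. Layers $1,\dots,k-1$ are the hidden layers. *)

theory Defs
  imports "HOL-Analysis.Analysis"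
begin

text \<open>Vectors in R^d are represented as functions nat => real; only the
  coordinates 0..d-1 are meaningful.  R^m itself is the subset
  {x. \<forall>i\<ge>m. x i = 0} of nat => real (product topology).\<close>

definition euclid :: "nat \<Rightarrow> (nat \<Rightarrow> real) set" where
  "euclid m = {x. \<forall>i\<ge>m. x i = 0}"

definition C_n :: "nat \<Rightarrow> (real \<Rightarrow> real) \<Rightarrow> bool" where
  "C_n n \<psi> \<longleftrightarrow> (\<forall>k<n. \<forall>x. (deriv ^^ k) \<psi> differentiable at x)
                   \<and> continuous_on UNIV ((deriv ^^ n) \<psi>)"

definition multi_indices :: "nat \<Rightarrow> nat \<Rightarrow> (nat \<Rightarrow> nat) set" where
  "multi_indices m n = {\<alpha>. (\<forall>i\<ge>m. \<alpha> i = 0) \<and> (\<Sum>i<m. \<alpha> i) \<le> n}"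

definition poly_map :: "nat \<Rightarrow> nat \<Rightarrow> nat \<Rightarrow> ((nat \<Rightarrow> nat) \<Rightarrow> nat \<Rightarrow> real)
                        \<Rightarrow> (nat \<Rightarrow> real) \<Rightarrow> (nat \<Rightarrow> real)" where
  "poly_map m r n c x = (\<lambda>j. if j < r then
      (\<Sum>\<alpha>\<in>multi_indices m n. c \<alpha> j * (\<Prod>i<m. x i ^ \<alpha> i)) else 0)"

definition affine_layer :: "nat \<Rightarrow> nat \<Rightarrow> (nat \<Rightarrow> nat \<Rightarrow> real) \<Rightarrow> (nat \<Rightarrow> real)
                            \<Rightarrow> (nat \<Rightarrow> real) \<Rightarrow> (nat \<Rightarrow> real)" where
  "affine_layer din dout W b x = (\<lambda>i. if i < dout then (\<Sum>j<din. W i j * x j) + b i else 0)"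

text \<open>Response of the network with architecture (d_0,...,d_k, psi), given as the
  dimension list ds = [d_0,...,d_k] and parameters
  theta = [(W_1,b_1),...,(W_k,b_k)]  (so length theta = k = length ds - 1).\<close>
fun nn_response :: "(real \<Rightarrow> real) \<Rightarrow> nat list \<Rightarrow> ((nat \<Rightarrow> nat \<Rightarrow> real) \<times> (nat \<Rightarrow> real)) list
                     \<Rightarrow> (nat \<Rightarrow> real) \<Rightarrow> (nat \<Rightarrow> real)" where
  "nn_response \<psi> (d0 # d1 # ds) (Wb # \<theta>) x =
     (let y = affine_layer d0 d1 (fst Wb) (snd Wb) x in
      if ds = [] then y
      else nn_response \<psi> (d1 # ds) \<theta> (\<lambda>i. if i < d1 then \<psi> (y i) else 0))"
| "nn_response \<psi> _ _ x = x"

end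

theory Submission
  imports Defs
begin

text \<open>Choose a point \<open>b\<close> at which the derivatives of \<open>\<psi>\<close> of orders \<open>1, \<dots>, n\<close> are all nonzero.
  For each nonlinear multi-index \<open>\<beta>\<close> (\<open>2 \<le> |\<beta>| \<le> n\<close>) the Taylor expansion of the neuron
  \<open>\<psi>(b + h \<beta> \<cdot> u)\<close> contains the powers \<open>(\<beta> \<cdot> u)\<^sup>l\<close>; since the matrix \<open>(\<beta>\<^sup>\<gamma>)\<close> over nonlinear
  multi-indices is invertible, suitable combinations of these neurons isolate every monomial of
  degree \<open>\<ge> 2\<close>, and one further neuron, an approximate identity, supplies the linear part. So
  each coordinate of \<open>p\<close> is approximated on a cube by a shallow network with \<open>C(n + m, m) - m\<close>
  neurons. The deep network places these shallow networks side by side in the wide layer, while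
  every other hidden layer relays its input through neurons \<open>\<psi>(b + s z)\<close> with \<open>s\<close> small, which
  after affine decoding approximate the identity.\<close>

section \<open>Smooth activation functions\<close>

lemma C_n_has_real_derivative:
  assumes "C_n n \<psi>" "j < n"
  shows "((deriv ^^ j) \<psi> has_real_derivative (deriv ^^ Suc j) \<psi> x) (at x)"
  using assms unfolding C_n_def by (simp add: DERIV_deriv_iff_real_differentiable)

lemma C_n_isCont:
  assumes "C_n n \<psi>" "j \<le> n"
  shows "isCont ((deriv ^^ j) \<psi>) x"
proof (cases "j < n")
  case True
  then show ?thesis using C_n_has_real_derivative[OF assms(1)] DERIV_isCont by blast
next
  case False
  then show ?thesis
    using assms unfolding C_n_def by (simp add: continuous_on_eq_continuous_at)
qed

lemma C_n_continuous: "C_n n \<psi> \<Longrightarrow> continuous_on UNIV \<psi>"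
  using C_n_isCont[of n \<psi> 0] by (simp add: continuous_at_imp_continuous_on)

lemma C_n_taylor_remainder:
  assumes "C_n n \<psi>" "1 \<le> j" "j \<le> n" "e > 0"
  shows "\<exists>\<delta>>0. \<forall>t. \<bar>t\<bar> < \<delta> \<longrightarrow>
     \<bar>\<psi> (b + t) - (\<Sum>l\<le>j. (deriv ^^ l) \<psi> b / fact l * t ^ l)\<bar> \<le> e * \<bar>t\<bar> ^ j"
proof -
  let ?D = "\<lambda>l. (deriv ^^ l) \<psi>"
  have "isCont (?D j) b" "e * fact j > 0"
    using C_n_isCont assms by auto
  then obtain \<delta> where \<delta>: "\<delta> > 0" "\<And>y. \<bar>y - b\<bar> < \<delta> \<Longrightarrow> \<bar>?D j y - ?D j b\<bar> < e * fact j"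
    unfolding continuous_at_eps_delta dist_real_def by blast
  have "\<bar>\<psi> (b + t) - (\<Sum>l\<le>j. ?D l b / fact l * t ^ l)\<bar> \<le> e * \<bar>t\<bar> ^ j"
    if t: "\<bar>t\<bar> < \<delta>" for t
  proof (cases "t = 0")
    case True
    then show ?thesis using assms(2) by (simp add: sum.atMost_shift power_0_left)
  next
    case False
    have "\<forall>l s. l < j \<and> b - \<bar>t\<bar> \<le> s \<and> s \<le> b + \<bar>t\<bar> \<longrightarrow> DERIV (?D l) s :> ?D (Suc l) s"
      using C_n_has_real_derivative[OF assms(1)] assms(3) by auto
    then have "\<exists>z. (if b + t < b then b + t < z \<and> z < b else b < z \<and> z < b + t) \<and>
      \<psi> (b + t) = (\<Sum>l<j. ?D l b / fact l * (b + t - b) ^ l) + ?D j z / fact j * (b + t - b) ^ j"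
      by (intro Taylor[of j ?D \<psi> "b - \<bar>t\<bar>" "b + \<bar>t\<bar>" b "b + t"]) (use False assms(2) in auto)
    then obtain z where z: "if b + t < b then b + t < z \<and> z < b else b < z \<and> z < b + t"
      "\<psi> (b + t) = (\<Sum>l<j. ?D l b / fact l * (b + t - b) ^ l) + ?D j z / fact j * (b + t - b) ^ j"
      by blast
    have "\<psi> (b + t) - (\<Sum>l\<le>j. ?D l b / fact l * t ^ l) = (?D j z - ?D j b) / fact j * t ^ j"
      using z(2) by (simp add: lessThan_Suc_atMost[symmetric] diff_divide_distrib left_diff_distrib)
    also have "\<bar>\<dots>\<bar> = \<bar>?D j z - ?D j b\<bar> / fact j * \<bar>t\<bar> ^ j"
      by (simp add: abs_mult power_abs)
    also have "\<dots> \<le> e * \<bar>t\<bar> ^ j"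
    proof -
      have "\<bar>z - b\<bar> < \<delta>" using z(1) t by (auto split: if_splits)
      then have "\<bar>?D j z - ?D j b\<bar> / fact j \<le> e"
        using \<delta>(2) by (simp add: divide_le_eq mult.commute less_imp_le)
      then show ?thesis by (intro mult_right_mono) auto
    qed
    finally show ?thesis .
  qed
  then show ?thesis using \<delta>(1) by blast
qed

text \<open>By the mean value theorem a function whose derivative does not vanish on \<open>(a, c)\<close>
  has at most one zero there, so it has no zero on one of the two halves.\<close>

lemma nonzero_on_subinterval:
  fixes f f' :: "real \<Rightarrow> real"
  assumes f': "\<And>y. (f has_real_derivative f' y) (at y)"
    and ac: "a < c" and nz: "\<And>y. a < y \<Longrightarrow> y < c \<Longrightarrow> f' y \<noteq> 0"
  shows "\<exists>a' c'. a \<le> a' \<and> a' < c' \<and> c' \<le> c \<and> (\<forall>y. a' < y \<and> y < c' \<longrightarrow> f y \<noteq> 0)"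
proof -
  define mid where "mid = (a + c) / 2"
  have at_most_one_zero: "z1 = z2"
    if zs: "a < z1" "z1 \<le> z2" "z2 < c" "f z1 = 0" "f z2 = 0" for z1 z2
  proof (rule ccontr)
    assume "z1 \<noteq> z2"
    then have "z1 < z2" using zs(2) by simp
    then obtain z where "z1 < z" "z < z2" "f z2 - f z1 = (z2 - z1) * f' z"
      using MVT2[of z1 z2 f f'] f' by blast
    then show False using nz[of z] zs by auto
  qed
  show ?thesis
  proof (cases "\<exists>z. a < z \<and> z < mid \<and> f z = 0")
    case True
    then obtain z where "a < z" "z < mid" "f z = 0" by blast
    then have "f y \<noteq> 0" if "mid < y" "y < c" for y
      using at_most_one_zero[of z y] that by auto
    then show ?thesis using ac by (intro exI[of _ mid] exI[of _ c]) (auto simp: mid_def)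
  next
    case False
    then show ?thesis using ac by (intro exI[of _ a] exI[of _ mid]) (auto simp: mid_def)
  qed
qed

lemma C_n_derivs_nonzero_at:
  assumes "C_n n \<psi>" "(deriv ^^ n) \<psi> x0 \<noteq> 0" "1 \<le> n"
  shows "\<exists>b. \<forall>j. 1 \<le> j \<and> j \<le> n \<longrightarrow> (deriv ^^ j) \<psi> b \<noteq> 0"
proof -
  let ?D = "\<lambda>l. (deriv ^^ l) \<psi>"
  let ?P = "\<lambda>i. \<exists>a c. a < c \<and> (\<forall>y. a < y \<and> y < c \<longrightarrow> (\<forall>j. i \<le> j \<and> j \<le> n \<longrightarrow> ?D j y \<noteq> 0))"
  have "?P 1" using \<open>1 \<le> n\<close>
  proof (induction rule: inc_induct)
    case base
    obtain \<delta> where "\<delta> > 0" "\<And>y. dist x0 y < \<delta> \<Longrightarrow> ?D n y \<noteq> 0"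
      using continuous_at_avoid[OF C_n_isCont[OF assms(1) order.refl] assms(2)] by blast
    then show ?case
      by (intro exI[of _ "x0 - \<delta>"] exI[of _ "x0 + \<delta>"]) (auto simp: dist_real_def)
  next
    case (step i)
    then obtain a c where ac: "a < c" "\<And>y j. a < y \<Longrightarrow> y < c \<Longrightarrow> Suc i \<le> j \<Longrightarrow> j \<le> n \<Longrightarrow> ?D j y \<noteq> 0"
      by blast
    have "?D (Suc i) y \<noteq> 0" if "a < y" "y < c" for y
      using ac(2)[of y "Suc i"] that step.hyps by simp
    then obtain a' c' where a'c': "a \<le> a'" "a' < c'" "c' \<le> c"
      and Di: "\<And>y. a' < y \<Longrightarrow> y < c' \<Longrightarrow> ?D i y \<noteq> 0"
      using nonzero_on_subinterval[of "?D i" "?D (Suc i)" a c] C_n_has_real_derivative[OF assms(1)]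
        step.hyps ac(1) by blast
    have "\<forall>y. a' < y \<and> y < c' \<longrightarrow> (\<forall>j. i \<le> j \<and> j \<le> n \<longrightarrow> ?D j y \<noteq> 0)"
    proof (intro allI impI)
      fix y j assume "a' < y \<and> y < c'" "i \<le> j \<and> j \<le> n"
      then show "?D j y \<noteq> 0"
        using Di ac(2)[of y j] a'c' by (cases "j = i") auto
    qed
    then show ?case using a'c'(2) by blast
  qed
  then obtain a c where "a < c" "\<And>y j. a < y \<Longrightarrow> y < c \<Longrightarrow> 1 \<le> j \<Longrightarrow> j \<le> n \<Longrightarrow> ?D j y \<noteq> 0"
    by blast
  then show ?thesis by (intro exI[of _ "(a + c) / 2"]) auto
qed

text \<open>Near a point \<open>b\<close> with \<open>\<psi>'(b) \<noteq> 0\<close>, the map \<open>y \<mapsto> \<psi>(b + s y)\<close> is affine up to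
  \<open>o(s)\<close>; undoing that affine map gives an approximate identity, which lets a layer
  of neurons pass its input on almost unchanged.\<close>

definition act_rescaled :: "(real \<Rightarrow> real) \<Rightarrow> real \<Rightarrow> real \<Rightarrow> real \<Rightarrow> real" where
  "act_rescaled \<psi> b s y = (\<psi> (b + s * y) - \<psi> b) / (s * deriv \<psi> b)"

lemma act_rescaled_approx_id:
  assumes "C_n n \<psi>" "1 \<le> n" "deriv \<psi> b \<noteq> 0" "M \<ge> 0" "e > 0"
  shows "\<exists>s>0. \<forall>y. \<bar>y\<bar> \<le> M \<longrightarrow> \<bar>act_rescaled \<psi> b s y - y\<bar> \<le> e"
proof -
  let ?d = "deriv \<psi> b"
  define \<eta> where "\<eta> = e * \<bar>?d\<bar> / (M + 1)"
  have "\<eta> > 0" using assms by (simp add: \<eta>_def)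
  then obtain \<delta> where \<delta>: "\<delta> > 0"
    "\<And>t. \<bar>t\<bar> < \<delta> \<Longrightarrow> \<bar>\<psi> (b + t) - (\<Sum>l\<le>1. (deriv ^^ l) \<psi> b / fact l * t ^ l)\<bar> \<le> \<eta> * \<bar>t\<bar> ^ 1"
    using C_n_taylor_remainder[OF assms(1) order.refl assms(2)] by blast
  define s where "s = \<delta> / (M + 1)"
  have s: "s > 0" using \<delta> assms(4) by (simp add: s_def)
  have "\<bar>act_rescaled \<psi> b s y - y\<bar> \<le> e" if y: "\<bar>y\<bar> \<le> M" for y
  proof -
    have "\<bar>s * y\<bar> \<le> s * M" using s y by (simp add: abs_mult mult_left_mono)
    also have "\<dots> < \<delta>" using \<delta> assms(4) by (simp add: s_def field_simps)
    finally have "\<bar>s * y\<bar> < \<delta>" .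
    then have rem: "\<bar>\<psi> (b + s * y) - \<psi> b - ?d * (s * y)\<bar> \<le> \<eta> * \<bar>s * y\<bar>"
      using \<delta>(2)[of "s * y"] by (simp add: algebra_simps)
    have "act_rescaled \<psi> b s y - y = (\<psi> (b + s * y) - \<psi> b - ?d * (s * y)) / (s * ?d)"
      using s assms(3) by (simp add: act_rescaled_def field_simps)
    then have "\<bar>act_rescaled \<psi> b s y - y\<bar> = \<bar>\<psi> (b + s * y) - \<psi> b - ?d * (s * y)\<bar> / (s * \<bar>?d\<bar>)"
      using s by (simp add: abs_divide abs_mult)
    also have "\<dots> \<le> \<eta> * \<bar>s * y\<bar> / (s * \<bar>?d\<bar>)"
      using rem s by (intro divide_right_mono) auto
    also have "\<dots> = \<eta> * \<bar>y\<bar> / \<bar>?d\<bar>"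
      using s by (simp add: abs_mult)
    also have "\<dots> \<le> \<eta> * (M + 1) / \<bar>?d\<bar>"
      using y \<open>\<eta> > 0\<close> by (intro divide_right_mono mult_left_mono) auto
    also have "\<dots> = e" using assms(3,4) by (simp add: \<eta>_def)
    finally show ?thesis .
  qed
  then show ?thesis using s by blast
qed

lemma funpow_approx_id:
  fixes f :: "real \<Rightarrow> real"
  assumes f: "\<And>y. \<bar>y\<bar> \<le> M + 1 \<Longrightarrow> \<bar>f y - y\<bar> \<le> e" and "e \<ge> 0" "real L * e \<le> 1" "\<bar>t\<bar> \<le> M"
  shows "\<bar>(f ^^ L) t - t\<bar> \<le> real L * e"
  using assms(3)
proof (induction L)
  case (Suc L)
  then have IH: "\<bar>(f ^^ L) t - t\<bar> \<le> real L * e" "real L * e \<le> 1"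
    using \<open>e \<ge> 0\<close> by (simp_all add: distrib_right)
  then have "\<bar>(f ^^ L) t\<bar> \<le> M + 1" using \<open>\<bar>t\<bar> \<le> M\<close> by linarith
  then show ?case using f[of "(f ^^ L) t"] IH by (simp add: distrib_right)
qed simp

lemma act_rescaled_funpow_approx_id:
  assumes "C_n n \<psi>" "1 \<le> n" "deriv \<psi> b \<noteq> 0" "M \<ge> 0" "e > 0"
  shows "\<exists>s>0. \<forall>t. \<bar>t\<bar> \<le> M \<longrightarrow> \<bar>(act_rescaled \<psi> b s ^^ L) t - t\<bar> \<le> e"
proof -
  define e' where "e' = min e 1 / (real L + 1)"
  have "e' > 0" using assms by (simp add: e'_def)
  then obtain s where "s > 0" and s: "\<And>y. \<bar>y\<bar> \<le> M + 1 \<Longrightarrow> \<bar>act_rescaled \<psi> b s y - y\<bar> \<le> e'"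
    using act_rescaled_approx_id[OF assms(1-3), of "M + 1"] assms(4) by auto
  have "real L * e' = min e 1 * (real L / (real L + 1))" by (simp add: e'_def)
  also have "\<dots> \<le> min e 1" using assms(5) by (intro mult_left_le) auto
  finally have Le: "real L * e' \<le> min e 1" .
  have "\<bar>(act_rescaled \<psi> b s ^^ L) t - t\<bar> \<le> e" if "\<bar>t\<bar> \<le> M" for t
    using funpow_approx_id[where M = M and L = L and t = t, OF s] \<open>e' > 0\<close> Le that by simp
  then show ?thesis using \<open>s > 0\<close> by blast
qed

section \<open>Column spans and finite differences\<close>

definition lincomb_on :: "'g set \<Rightarrow> 'x set \<Rightarrow> ('g \<Rightarrow> 'x \<Rightarrow> real) \<Rightarrow> ('g \<Rightarrow> real) \<Rightarrow> bool" where
  "lincomb_on G X T v \<longleftrightarrow> (\<exists>w. \<forall>\<gamma>\<in>G. v \<gamma> = (\<Sum>x\<in>X. w x * T \<gamma> x))"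

lemma lincomb_on_cong: "lincomb_on G X T u \<Longrightarrow> (\<And>\<gamma>. \<gamma> \<in> G \<Longrightarrow> v \<gamma> = u \<gamma>) \<Longrightarrow> lincomb_on G X T v"
  unfolding lincomb_on_def by auto

lemma lincomb_on_zero: "lincomb_on G X T (\<lambda>_. 0)"
  unfolding lincomb_on_def by (intro exI[of _ "\<lambda>_. 0"]) auto

lemma lincomb_on_add: "lincomb_on G X T u \<Longrightarrow> lincomb_on G X T v \<Longrightarrow> lincomb_on G X T (\<lambda>\<gamma>. u \<gamma> + v \<gamma>)"
  unfolding lincomb_on_def
proof (elim exE)
  fix wu wv assume u: "\<forall>\<gamma>\<in>G. u \<gamma> = (\<Sum>x\<in>X. wu x * T \<gamma> x)" and v: "\<forall>\<gamma>\<in>G. v \<gamma> = (\<Sum>x\<in>X. wv x * T \<gamma> x)"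
  show "\<exists>w. \<forall>\<gamma>\<in>G. u \<gamma> + v \<gamma> = (\<Sum>x\<in>X. w x * T \<gamma> x)"
    by (rule exI[of _ "\<lambda>x. wu x + wv x"]) (simp add: u v distrib_right sum.distrib)
qed

lemma lincomb_on_cmult: "lincomb_on G X T v \<Longrightarrow> lincomb_on G X T (\<lambda>\<gamma>. c * v \<gamma>)"
  unfolding lincomb_on_def
proof (elim exE)
  fix wv assume v: "\<forall>\<gamma>\<in>G. v \<gamma> = (\<Sum>x\<in>X. wv x * T \<gamma> x)"
  show "\<exists>w. \<forall>\<gamma>\<in>G. c * v \<gamma> = (\<Sum>x\<in>X. w x * T \<gamma> x)"
    by (rule exI[of _ "\<lambda>x. c * wv x"]) (simp add: v sum_distrib_left mult.assoc)
qed

lemma lincomb_on_sum: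
  assumes "finite S" "\<And>s. s \<in> S \<Longrightarrow> lincomb_on G X T (f s)"
  shows "lincomb_on G X T (\<lambda>\<gamma>. \<Sum>s\<in>S. f s \<gamma>)"
  using assms
proof (induction S rule: finite_induct)
  case empty then show ?case using lincomb_on_zero by simp
next
  case (insert s S)
  have "lincomb_on G X T (\<lambda>\<gamma>. f s \<gamma> + (\<Sum>s\<in>S. f s \<gamma>))"
    using insert by (intro lincomb_on_add) auto
  then show ?case using insert by simp
qed

lemma lincomb_on_basis:
  assumes "x0 \<in> X" "finite X"
  shows "lincomb_on G X T (\<lambda>\<gamma>. T \<gamma> x0)"
  unfolding lincomb_on_def
proof (intro exI[of _ "\<lambda>x. if x = x0 then 1 else 0"] ballI)
  fix \<gamma>
  have "(\<Sum>x\<in>X. (if x = x0 then 1 else 0) * T \<gamma> x) = (\<Sum>x\<in>X. if x = x0 then T \<gamma> x else 0)"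
    by (rule sum.cong) auto
  also have "\<dots> = T \<gamma> x0" using assms by (simp add: sum.delta')
  finally show "T \<gamma> x0 = (\<Sum>x\<in>X. (if x = x0 then 1 else 0) * T \<gamma> x)" by simp
qed

fun fwd_diff :: "nat \<Rightarrow> (nat \<Rightarrow> real) \<Rightarrow> real" where
  "fwd_diff 0 g = g 0"
| "fwd_diff (Suc a) g = fwd_diff a (\<lambda>j. g (Suc j) - g j)"

lemma fwd_diff_diff: "fwd_diff a (\<lambda>j. f j - g j) = fwd_diff a f - fwd_diff a g"
proof (induction a arbitrary: f g)
  case 0 then show ?case by simp
next
  case (Suc a)
  have "fwd_diff (Suc a) (\<lambda>j. f j - g j) = fwd_diff a (\<lambda>j. (f (Suc j) - f j) - (g (Suc j) - g j))"
    by (simp add: algebra_simps)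
  then show ?case using Suc by simp
qed

lemma fwd_diff_cmult: "fwd_diff a (\<lambda>j. c * f j) = c * fwd_diff a f"
proof (induction a arbitrary: f)
  case 0 then show ?case by simp
next
  case (Suc a)
  have "fwd_diff (Suc a) (\<lambda>j. c * f j) = fwd_diff a (\<lambda>j. c * (f (Suc j) - f j))"
    by (simp add: algebra_simps)
  then show ?case using Suc by simp
qed

lemma fwd_diff_sum: "finite S \<Longrightarrow> fwd_diff a (\<lambda>j. \<Sum>s\<in>S. f s j) = (\<Sum>s\<in>S. fwd_diff a (f s))"
proof (induction a arbitrary: f)
  case 0 then show ?case by simp
next
  case (Suc a)
  have "fwd_diff (Suc a) (\<lambda>j. \<Sum>s\<in>S. f s j) = fwd_diff a (\<lambda>j. \<Sum>s\<in>S. f s (Suc j) - f s j)"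
    by (simp add: sum_subtractf)
  then show ?case using Suc by simp
qed

lemma fwd_diff_lincomb: "\<exists>w. \<forall>g. fwd_diff a g = (\<Sum>j\<le>a. w j * g j)"
proof (induction a)
  case 0 then show ?case by (intro exI[of _ "\<lambda>_. 1"]) simp
next
  case (Suc a)
  then obtain w where w: "\<And>g. fwd_diff a g = (\<Sum>j\<le>a. w j * g j)" by blast
  define w' where "w' j = (if 0 < j then w (j - 1) else 0) - (if j \<le> a then w j else 0)" for j
  have "fwd_diff (Suc a) g = (\<Sum>j\<le>Suc a. w' j * g j)" for g
  proof -
    have "fwd_diff (Suc a) g = (\<Sum>j\<le>a. w j * g (Suc j)) - (\<Sum>j\<le>a. w j * g j)"
      by (simp add: w right_diff_distrib sum_subtractf)
    also have "(\<Sum>j\<le>a. w j * g (Suc j)) = (\<Sum>j\<le>Suc a. (if 0 < j then w (j - 1) else 0) * g j)"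
      by (subst sum.atMost_Suc_shift) simp
    also have "(\<Sum>j\<le>a. w j * g j) = (\<Sum>j\<le>Suc a. (if j \<le> a then w j else 0) * g j)"
      by (simp add: sum.atMost_Suc)
    finally show ?thesis by (simp add: w'_def left_diff_distrib sum_subtractf)
  qed
  then show ?case by blast
qed

lemma of_nat_Suc_power_diff: "real (Suc j) ^ c - real j ^ c = (\<Sum>l<c. real (c choose l) * real j ^ l)"
proof -
  have "real (Suc j) ^ c = (real j + 1) ^ c" by (simp add: add.commute)
  also have "\<dots> = (\<Sum>l\<le>c. real (c choose l) * real j ^ l)"
    by (simp add: binomial_ring)
  also have "\<dots> = (\<Sum>l<c. real (c choose l) * real j ^ l) + real j ^ c"
    by (simp add: lessThan_Suc_atMost[symmetric])
  finally show ?thesis by simp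
qed

lemma fwd_diff_power: "c \<le> a \<Longrightarrow> fwd_diff a (\<lambda>j. real j ^ c) = (if c = a then fact a else 0)"
proof (induction a arbitrary: c)
  case 0 then show ?case by simp
next
  case (Suc a)
  have eq: "(\<lambda>j. real (Suc j) ^ c - real j ^ c) = (\<lambda>j. \<Sum>l<c. real (c choose l) * real j ^ l)"
    by (rule ext) (rule of_nat_Suc_power_diff)
  have "fwd_diff (Suc a) (\<lambda>j. real j ^ c) = fwd_diff a (\<lambda>j. \<Sum>l<c. real (c choose l) * real j ^ l)"
    by (simp only: fwd_diff.simps eq)
  also have "\<dots> = (\<Sum>l<c. real (c choose l) * fwd_diff a (\<lambda>j. real j ^ l))"
    by (simp add: fwd_diff_sum fwd_diff_cmult)
  also have "\<dots> = (\<Sum>l<c. real (c choose l) * (if l = a then fact a else 0))"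
    using Suc.prems by (intro sum.cong refl) (simp add: Suc.IH)
  also have "\<dots> = (if c = Suc a then fact (Suc a) else 0)"
  proof (cases "c = Suc a")
    case True
    have "(\<Sum>l<c. real (c choose l) * (if l = a then fact a else 0)) = (\<Sum>l<c. if l = a then real (c choose l) * fact a else 0)"
      by (rule sum.cong) auto
    also have "\<dots> = real (Suc a choose a) * fact a" using True by (simp add: sum.delta')
    also have "\<dots> = fact (Suc a)" by (simp add: binomial_Suc_n)
    finally show ?thesis using True by simp
  next
    case False
    then have "c \<le> a" using Suc.prems by simp
    then show ?thesis using False by (intro trans[OF sum.neutral]) auto
  qed
  finally show ?case .
qed

lemma fwd_diff_shifted_power: "e < a \<Longrightarrow> fwd_diff a (\<lambda>j. (real j + 1) ^ e) = 0"
proof -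
  assume e: "e < a"
  have "fwd_diff a (\<lambda>j. (real j + 1) ^ e) = fwd_diff a (\<lambda>j. \<Sum>l\<le>e. real (e choose l) * real j ^ l)"
    by (simp add: binomial_ring)
  also have "\<dots> = (\<Sum>l\<le>e. real (e choose l) * fwd_diff a (\<lambda>j. real j ^ l))"
    by (simp add: fwd_diff_sum fwd_diff_cmult)
  also have "\<dots> = 0" using e by (intro sum.neutral) (simp add: fwd_diff_power)
  finally show ?thesis .
qed

lemma fwd_diff_telescope: "(\<Sum>l\<le>L. (-1) ^ l * fwd_diff l (\<lambda>j. g (Suc j))) = g 0 + (-1) ^ L * fwd_diff (Suc L) g"
proof (induction L)
  case 0 then show ?case by simp
next
  case (Suc L)
  have "fwd_diff (Suc L) (\<lambda>j. g (Suc j)) - fwd_diff (Suc L) g = fwd_diff (Suc (Suc L)) g"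
    using fwd_diff_diff[of "Suc L" "\<lambda>j. g (Suc j)" g] by simp
  then show ?case using Suc by (simp add: algebra_simps)
qed

text \<open>For \<open>2 \<le> a \<le> n\<close>, \<open>g j = (j + 1)^(a - 2)\<close> has degree below \<open>n - 1\<close>, so telescoping its
  forward differences expresses \<open>g 0 = 1\<close> through the values \<open>(j + 2)^a / (j + 2)^2\<close> with
  weights independent of \<open>a\<close>.\<close>

lemma one_eq_telescoped_powers:
  assumes W: "\<And>l g. fwd_diff l g = (\<Sum>j\<le>l. W l j * g j)" and "2 \<le> a" "a \<le> n"
  shows "1 = (\<Sum>l\<le>n - 2. (-1) ^ l * (\<Sum>j\<le>l. W l j / real (j + 2) ^ 2 * real (j + 2) ^ a))"
proof -
  let ?g = "\<lambda>j. (real j + 1) ^ (a - 2)"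
  have "(\<Sum>l\<le>n - 2. (-1) ^ l * fwd_diff l (\<lambda>j. ?g (Suc j))) = ?g 0 + (-1) ^ (n - 2) * fwd_diff (Suc (n - 2)) ?g"
    by (rule fwd_diff_telescope)
  also have "fwd_diff (Suc (n - 2)) ?g = 0" using assms by (intro fwd_diff_shifted_power) auto
  finally have "1 = (\<Sum>l\<le>n - 2. (-1) ^ l * fwd_diff l (\<lambda>j. ?g (Suc j)))" by simp
  moreover have "?g (Suc j) = real (j + 2) ^ a / real (j + 2) ^ 2" for j
    using \<open>2 \<le> a\<close> by (simp add: power_diff add.commute)
  ultimately show ?thesis by (simp add: W)
qed

lemma one_lincomb_powers:
  assumes "2 \<le> n"
  shows "lincomb_on {2..n} {2..n} (\<lambda>a j. real j ^ a) (\<lambda>_. 1)"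
proof -
  obtain W where W: "\<And>l g. fwd_diff l g = (\<Sum>j\<le>l. W l j * g j)"
    using fwd_diff_lincomb by metis
  have "lincomb_on {2..n} {2..n} (\<lambda>a j. real j ^ a)
      (\<lambda>a. \<Sum>l\<le>n - 2. (-1) ^ l * (\<Sum>j\<le>l. W l j / real (j + 2) ^ 2 * real (j + 2) ^ a))"
    using assms by (intro lincomb_on_sum lincomb_on_cmult lincomb_on_basis) auto
  then show ?thesis
    by (rule lincomb_on_cong) (use one_eq_telescoped_powers[OF W] in auto)
qed

section \<open>Multi-indices\<close>

definition mi_degree :: "nat \<Rightarrow> (nat \<Rightarrow> nat) \<Rightarrow> nat" where
  "mi_degree m \<alpha> = (\<Sum>i<m. \<alpha> i)"

definition mi_unit :: "nat \<Rightarrow> nat \<Rightarrow> nat" where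
  "mi_unit i = (\<lambda>l. if l = i then 1 else 0)"

definition nonlinear_indices :: "nat \<Rightarrow> nat \<Rightarrow> (nat \<Rightarrow> nat) set" where
  "nonlinear_indices m n = {\<alpha> \<in> multi_indices m n. 2 \<le> mi_degree m \<alpha>}"

lemma multi_indices_iff: "\<alpha> \<in> multi_indices m n \<longleftrightarrow> (\<forall>i\<ge>m. \<alpha> i = 0) \<and> mi_degree m \<alpha> \<le> n"
  unfolding multi_indices_def mi_degree_def by auto

lemma nonlinear_indices_iff:
  "\<alpha> \<in> nonlinear_indices m n \<longleftrightarrow> (\<forall>i\<ge>m. \<alpha> i = 0) \<and> mi_degree m \<alpha> \<le> n \<and> 2 \<le> mi_degree m \<alpha>"
  by (auto simp: nonlinear_indices_def multi_indices_iff)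

lemma finite_multi_indices: "finite (multi_indices m n)"
proof (rule finite_subset)
  show "multi_indices m n \<subseteq> {f. \<forall>x. (x \<in> {..<m} \<longrightarrow> f x \<in> {..n}) \<and> (x \<notin> {..<m} \<longrightarrow> f x = 0)}"
  proof (intro subsetI CollectI allI conjI impI)
    fix f x assume "f \<in> multi_indices m n" "x \<in> {..<m}"
    then show "f x \<in> {..n}"
      using member_le_sum[of x "{..<m}" f] by (auto simp: multi_indices_def)
  qed (auto simp: multi_indices_def)
qed (rule finite_set_of_finite_funs; simp)

lemma finite_nonlinear_indices: "finite (nonlinear_indices m n)"
  using finite_multi_indices by (rule finite_subset[rotated]) (auto simp: nonlinear_indices_def)

lemma mi_degree_Suc: "mi_degree (Suc m) \<gamma> = mi_degree m \<gamma> + \<gamma> m"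
  unfolding mi_degree_def by simp

lemma mi_degree_upd: "mi_degree (Suc m) (\<gamma>(m := a)) = mi_degree m \<gamma> + a"
  unfolding mi_degree_def by (simp add: lessThan_Suc)

lemma mi_degree_upd_0: "mi_degree m (\<gamma>(m := 0)) = mi_degree m \<gamma>"
  unfolding mi_degree_def by (intro sum.cong) auto

lemma mi_degree_single:
  assumes "i < m" "\<forall>l<m. l \<noteq> i \<longrightarrow> \<gamma> l = 0"
  shows "mi_degree m \<gamma> = \<gamma> i"
proof -
  have "mi_degree m \<gamma> = \<gamma> i + (\<Sum>l\<in>{..<m} - {i}. \<gamma> l)"
    unfolding mi_degree_def using assms by (subst sum.remove[of _ i]) auto
  also have "(\<Sum>l\<in>{..<m} - {i}. \<gamma> l) = 0" using assms by (intro sum.neutral) auto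
  finally show ?thesis by simp
qed

lemma mi_degree_mi_unit: "i < m \<Longrightarrow> mi_degree m (mi_unit i) = 1"
  using mi_degree_single[of i m "mi_unit i"] by (simp add: mi_unit_def)

lemma inj_mi_unit: "inj mi_unit"
  by (rule injI) (metis mi_unit_def zero_neq_one)

lemma monomial_mi_unit:
  fixes u :: "nat \<Rightarrow> 'a::comm_monoid_mult"
  assumes "i < m"
  shows "(\<Prod>l<m. u l ^ mi_unit i l) = u i"
proof -
  have "(\<Prod>l<m. u l ^ mi_unit i l) = u i * (\<Prod>l\<in>{..<m} - {i}. u l ^ mi_unit i l)"
    using assms by (subst prod.remove[of _ i]) (auto simp: mi_unit_def)
  also have "(\<Prod>l\<in>{..<m} - {i}. u l ^ mi_unit i l) = 1"
    by (intro prod.neutral) (auto simp: mi_unit_def)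
  finally show ?thesis by simp
qed

lemma multi_indices_0: "multi_indices m 0 = {\<lambda>_. 0}"
  by (auto simp: multi_indices_def) (metis lessThan_iff not_le)

lemma multi_indices_cases:
  assumes "\<alpha> \<in> multi_indices m n"
  obtains "\<alpha> = (\<lambda>_. 0)" | i where "i < m" "\<alpha> = mi_unit i" | "\<alpha> \<in> nonlinear_indices m n"
proof -
  have supp: "\<And>i. m \<le> i \<Longrightarrow> \<alpha> i = 0" using assms by (auto simp: multi_indices_iff)
  consider "mi_degree m \<alpha> = 0" | "mi_degree m \<alpha> = 1" | "2 \<le> mi_degree m \<alpha>" by linarith
  then show thesis
  proof cases
    case 1
    then have "\<alpha> = (\<lambda>_. 0)" using supp by (auto simp: mi_degree_def) (metis lessThan_iff not_le)
    then show thesis by (rule that(1))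
  next
    case 2
    then obtain i where i: "i < m" "\<alpha> i \<noteq> 0"
      unfolding mi_degree_def by (metis lessThan_iff sum.neutral zero_neq_one)
    have "mi_degree m \<alpha> = \<alpha> i + (\<Sum>l\<in>{..<m} - {i}. \<alpha> l)"
      unfolding mi_degree_def using i by (subst sum.remove[of _ i]) auto
    then have "\<alpha> i + (\<Sum>l\<in>{..<m} - {i}. \<alpha> l) = 1" using 2 by simp
    then have "\<alpha> i = 1" "(\<Sum>l\<in>{..<m} - {i}. \<alpha> l) = 0" using i(2) by linarith+
    then have "\<alpha> i = 1" "\<forall>l\<in>{..<m} - {i}. \<alpha> l = 0" by simp_all
    then have "\<alpha> = mi_unit i" using supp unfolding mi_unit_def
      by (metis Diff_iff One_nat_def lessThan_iff not_le singletonD)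
    then show thesis using that(2) i(1) by blast
  next
    case 3
    then show thesis using assms by (intro that(3)) (simp add: nonlinear_indices_def)
  qed
qed

lemma multi_indices_decomp:
  assumes "1 \<le> n"
  shows "multi_indices m n = insert (\<lambda>_. 0) (mi_unit ` {..<m} \<union> nonlinear_indices m n)"
    and "(\<lambda>_. 0) \<notin> mi_unit ` {..<m} \<union> nonlinear_indices m n"
    and "mi_unit ` {..<m} \<inter> nonlinear_indices m n = {}"
proof -
  show "multi_indices m n = insert (\<lambda>_. 0) (mi_unit ` {..<m} \<union> nonlinear_indices m n)"
    using assms mi_degree_mi_unit
    by (auto elim: multi_indices_cases simp: nonlinear_indices_def multi_indices_iff mi_unit_def)
       (simp_all add: mi_degree_def)
  have "mi_degree m (\<lambda>_. 0) = 0" by (simp add: mi_degree_def)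
  then show "(\<lambda>_. 0) \<notin> mi_unit ` {..<m} \<union> nonlinear_indices m n"
    using mi_degree_mi_unit by (auto simp: nonlinear_indices_iff)
  show "mi_unit ` {..<m} \<inter> nonlinear_indices m n = {}"
    using mi_degree_mi_unit by (auto simp: nonlinear_indices_iff)
qed

lemma card_multi_indices: "card (multi_indices m n) = (n + m) choose m"
proof (induction m arbitrary: n)
  case 0
  have "multi_indices 0 n = {\<lambda>_. 0}" by (auto simp: multi_indices_iff mi_degree_def)
  then show ?case by simp
next
  case (Suc m)
  let ?Sg = "SIGMA j:{..n}. multi_indices m (n - j)"
  have "bij_betw (\<lambda>(a, \<gamma>). \<gamma>(m := a)) ?Sg (multi_indices (Suc m) n)"
  proof (rule bij_betw_byWitness[where f' = "\<lambda>\<gamma>. (\<gamma> m, \<gamma>(m := 0))"])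
    show "\<forall>p\<in>?Sg. (\<lambda>\<gamma>. (\<gamma> m, \<gamma>(m := 0))) ((\<lambda>(a, \<gamma>). \<gamma>(m := a)) p) = p"
      by (auto simp: multi_indices_iff)
    show "(\<lambda>(a, \<gamma>). \<gamma>(m := a)) ` ?Sg \<subseteq> multi_indices (Suc m) n"
      by (auto simp: multi_indices_iff mi_degree_upd)
    show "(\<lambda>\<gamma>. (\<gamma> m, \<gamma>(m := 0))) ` multi_indices (Suc m) n \<subseteq> ?Sg"
      by (auto simp: multi_indices_iff mi_degree_Suc mi_degree_upd_0)
  qed auto
  then have "card (multi_indices (Suc m) n) = (\<Sum>j\<le>n. (n - j + m) choose m)"
    using Suc.IH by (simp add: bij_betw_same_card[symmetric] finite_multi_indices)
  also have "\<dots> = (\<Sum>t\<le>n. (t + m) choose m)"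
    by (rule sum.reindex_bij_witness[of _ "\<lambda>t. n - t" "\<lambda>t. n - t"]) auto
  also have "\<dots> = (\<Sum>t\<le>n. (m + t) choose t)"
    using binomial_symmetric[of m "_ + m"] by (simp add: add.commute)
  also have "\<dots> = (n + Suc m) choose Suc m"
    using sum_choose_lower[of m n] binomial_symmetric[of n "Suc (m + n)"] by (simp add: add.commute)
  finally show ?case .
qed

lemma card_nonlinear_indices:
  assumes "1 \<le> n"
  shows "card (nonlinear_indices m n) + 1 + m = (n + m) choose m"
proof -
  have "card (multi_indices m n) = 1 + (m + card (nonlinear_indices m n))"
    using multi_indices_decomp[OF assms] finite_nonlinear_indices[of m n]
    by (simp add: card_Un_disjoint card_image inj_on_subset[OF inj_mi_unit])
  then show ?thesis by (simp add: card_multi_indices)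
qed

lemma sum_multi_indices_decomp:
  fixes f :: "(nat \<Rightarrow> nat) \<Rightarrow> real"
  assumes "1 \<le> n"
  shows "(\<Sum>\<alpha>\<in>multi_indices m n. f \<alpha>)
     = f (\<lambda>_. 0) + (\<Sum>i<m. f (mi_unit i)) + (\<Sum>\<alpha>\<in>nonlinear_indices m n. f \<alpha>)"
  using multi_indices_decomp[OF assms] finite_nonlinear_indices[of m n]
  by (simp add: sum.union_disjoint sum.reindex inj_on_subset[OF inj_mi_unit] add.assoc)

section \<open>The power matrix on nonlinear multi-indices\<close>

text \<open>The matrix \<open>(\<beta>\<^sup>\<gamma>)\<close> indexed by nonlinear multi-indices \<open>\<gamma>, \<beta>\<close> is invertible: every unit
  vector lies in its column span (\<open>in_power_span_delta\<close>).\<close>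

definition lattice_monomial :: "nat \<Rightarrow> (nat \<Rightarrow> nat) \<Rightarrow> (nat \<Rightarrow> nat) \<Rightarrow> real" where
  "lattice_monomial m \<gamma> \<beta> = (\<Prod>i<m. real (\<beta> i) ^ \<gamma> i)"

abbreviation in_power_span :: "nat \<Rightarrow> nat \<Rightarrow> ((nat \<Rightarrow> nat) \<Rightarrow> real) \<Rightarrow> bool" where
  "in_power_span m n v \<equiv> lincomb_on (nonlinear_indices m n) (nonlinear_indices m n) (lattice_monomial m) v"

lemma lattice_monomial_0:
  assumes "\<gamma> \<in> nonlinear_indices m n"
  shows "lattice_monomial m \<gamma> (\<lambda>_. 0) = 0"
proof -
  obtain i where "i < m" "\<gamma> i \<noteq> 0"
    using assms unfolding nonlinear_indices_iff mi_degree_def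
    by (metis lessThan_iff not_numeral_le_zero sum.neutral)
  then show ?thesis unfolding lattice_monomial_def by (intro prod_zero) auto
qed

lemma lattice_monomial_axis:
  assumes "i < m"
  shows "lattice_monomial m \<gamma> (\<lambda>l. if l = i then j else 0)
    = (if \<forall>l<m. l \<noteq> i \<longrightarrow> \<gamma> l = 0 then real j ^ \<gamma> i else 0)"
proof -
  have "lattice_monomial m \<gamma> (\<lambda>l. if l = i then j else 0)
      = real j ^ \<gamma> i * (\<Prod>l\<in>{..<m} - {i}. 0 ^ \<gamma> l)"
    unfolding lattice_monomial_def using assms by (subst prod.remove[of _ i]) auto
  moreover have "(\<Prod>l\<in>{..<m} - {i}. (0::real) ^ \<gamma> l) = 1" if "\<forall>l<m. l \<noteq> i \<longrightarrow> \<gamma> l = 0"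
    using that by (intro prod.neutral) auto
  moreover have "(\<Prod>l\<in>{..<m} - {i}. (0::real) ^ \<gamma> l) = 0" if "\<not> (\<forall>l<m. l \<noteq> i \<longrightarrow> \<gamma> l = 0)"
    using that by (intro prod_zero) auto
  ultimately show ?thesis by auto
qed

text \<open>Points on the coordinate axes: since \<open>1\<close> is a combination of \<open>a \<mapsto> j\<^sup>a\<close>, \<open>2 \<le> j \<le> n\<close>,
  on exponents \<open>2 \<le> a \<le> n\<close>, the same combination of the axis points \<open>j e\<^sub>i\<close> gives the unit point \<open>e\<^sub>i\<close>.\<close>

lemma in_power_span_mi_unit:
  assumes "i < m"
  shows "in_power_span m n (\<lambda>\<gamma>. lattice_monomial m \<gamma> (mi_unit i))"
proof (cases "2 \<le> n")
  case False
  then have "nonlinear_indices m n = {}" by (auto simp: nonlinear_indices_iff)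
  then show ?thesis by (simp add: lincomb_on_def)
next
  case True
  obtain c where c: "\<And>a. a \<in> {2..n} \<Longrightarrow> 1 = (\<Sum>j\<in>{2..n}. c j * real j ^ a)"
    using one_lincomb_powers[OF True] unfolding lincomb_on_def by metis
  have axis: "(\<lambda>l. if l = i then j else 0) \<in> nonlinear_indices m n" if "j \<in> {2..n}" for j
    using mi_degree_single[of i m "\<lambda>l. if l = i then j else 0"] assms that
    by (auto simp: nonlinear_indices_iff)
  have "in_power_span m n (\<lambda>\<gamma>. \<Sum>j\<in>{2..n}. c j * lattice_monomial m \<gamma> (\<lambda>l. if l = i then j else 0))"
    using axis finite_nonlinear_indices
    by (intro lincomb_on_sum lincomb_on_cmult lincomb_on_basis) auto
  then show ?thesis
  proof (rule lincomb_on_cong)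
    fix \<gamma> assume \<gamma>: "\<gamma> \<in> nonlinear_indices m n"
    have unit: "mi_unit i = (\<lambda>l. if l = i then 1 else 0)" by (simp add: mi_unit_def)
    show "lattice_monomial m \<gamma> (mi_unit i)
        = (\<Sum>j\<in>{2..n}. c j * lattice_monomial m \<gamma> (\<lambda>l. if l = i then j else 0))"
    proof (cases "\<forall>l<m. l \<noteq> i \<longrightarrow> \<gamma> l = 0")
      case True
      then have "\<gamma> i \<in> {2..n}" using mi_degree_single[OF assms True] \<gamma> by (auto simp: nonlinear_indices_iff)
      then show ?thesis using True c[of "\<gamma> i"]
        by (simp add: unit lattice_monomial_axis[OF assms] del: of_nat_1)
    next
      case False
      then show ?thesis
        by (simp only: unit lattice_monomial_axis[OF assms] if_not_P[OF False] if_False mult_zero_right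
            sum.neutral_const)
    qed
  qed
qed

lemma in_power_span_lattice_point:
  assumes "\<beta> \<in> multi_indices m n"
  shows "in_power_span m n (\<lambda>\<gamma>. lattice_monomial m \<gamma> \<beta>)"
  using assms
proof (cases rule: multi_indices_cases)
  case 1
  then show ?thesis using lattice_monomial_0 by (intro lincomb_on_cong[OF lincomb_on_zero]) auto
next
  case (2 i)
  then show ?thesis using in_power_span_mi_unit by simp
next
  case 3
  then show ?thesis using finite_nonlinear_indices by (intro lincomb_on_basis)
qed

text \<open>The mixed forward difference \<open>\<Delta>\<^sup>\<alpha>\<close> of \<open>x\<^sup>\<gamma>\<close> at \<open>0\<close> is a combination of values at lattice
  points below \<open>\<alpha>\<close>, and it vanishes unless \<open>\<alpha> \<le> \<gamma>\<close> componentwise.\<close>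

definition diff_row :: "nat \<Rightarrow> (nat \<Rightarrow> nat) \<Rightarrow> (nat \<Rightarrow> nat) \<Rightarrow> real" where
  "diff_row m \<alpha> \<gamma> = (\<Prod>i<m. fwd_diff (\<alpha> i) (\<lambda>j. real j ^ \<gamma> i))"

lemma in_power_span_diff_row:
  assumes "\<alpha> \<in> multi_indices m n"
  shows "in_power_span m n (diff_row m \<alpha>)"
proof -
  obtain W where W: "\<And>a g. fwd_diff a g = (\<Sum>j\<le>a. W a j * g j)"
    using fwd_diff_lincomb by metis
  let ?P = "PiE {..<m} (\<lambda>i. {..\<alpha> i})"
  let ?ext = "\<lambda>g i. if i < m then g i else 0"
  have eq: "diff_row m \<alpha> \<gamma> = (\<Sum>g\<in>?P. (\<Prod>i<m. W (\<alpha> i) (g i)) * lattice_monomial m \<gamma> (?ext g))" for \<gamma>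
  proof -
    have "diff_row m \<alpha> \<gamma> = (\<Prod>i<m. \<Sum>j\<le>\<alpha> i. W (\<alpha> i) j * real j ^ \<gamma> i)"
      unfolding diff_row_def by (simp add: W)
    also have "\<dots> = (\<Sum>g\<in>?P. \<Prod>i<m. W (\<alpha> i) (g i) * real (g i) ^ \<gamma> i)"
      by (rule prod_sum_PiE) auto
    also have "\<dots> = (\<Sum>g\<in>?P. (\<Prod>i<m. W (\<alpha> i) (g i)) * lattice_monomial m \<gamma> (?ext g))"
      unfolding lattice_monomial_def by (intro sum.cong refl) (simp add: prod.distrib)
    finally show ?thesis .
  qed
  have "?ext g \<in> multi_indices m n" if "g \<in> ?P" for g
  proof -
    have "mi_degree m (?ext g) \<le> mi_degree m \<alpha>"
      unfolding mi_degree_def using that by (intro sum_mono) (auto simp: PiE_iff)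
    then show ?thesis using assms by (simp add: multi_indices_iff)
  qed
  then have "in_power_span m n (\<lambda>\<gamma>. \<Sum>g\<in>?P. (\<Prod>i<m. W (\<alpha> i) (g i)) * lattice_monomial m \<gamma> (?ext g))"
    by (intro lincomb_on_sum lincomb_on_cmult in_power_span_lattice_point) (simp_all add: finite_PiE)
  then show ?thesis by (rule lincomb_on_cong) (rule eq)
qed

lemma diff_row_eq_0: "i < m \<Longrightarrow> \<gamma> i < \<alpha> i \<Longrightarrow> diff_row m \<alpha> \<gamma> = 0"
  unfolding diff_row_def by (intro prod_zero bexI[of _ i]) (auto simp: fwd_diff_power)

lemma diff_row_diag: "diff_row m \<alpha> \<alpha> \<noteq> 0"
  unfolding diff_row_def by (simp add: fwd_diff_power)

lemma diff_row_nonzero_imp_degree_less: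
  assumes "\<alpha> \<in> nonlinear_indices m n" "\<eta> \<in> nonlinear_indices m n" "\<eta> \<noteq> \<alpha>"
    and "diff_row m \<alpha> \<eta> \<noteq> 0"
  shows "mi_degree m \<alpha> < mi_degree m \<eta>"
proof -
  have ge: "\<forall>i<m. \<alpha> i \<le> \<eta> i"
    using diff_row_eq_0 assms(4) by (meson not_le)
  have "\<exists>i<m. \<alpha> i < \<eta> i"
  proof (rule ccontr)
    assume "\<not> (\<exists>i<m. \<alpha> i < \<eta> i)"
    then have "\<forall>i<m. \<eta> i = \<alpha> i" using ge by (meson antisym not_less)
    moreover have "\<forall>i\<ge>m. \<eta> i = \<alpha> i" using assms(1,2) by (auto simp: nonlinear_indices_iff)
    ultimately have "\<eta> = \<alpha>" by (metis ext not_le)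
    then show False using assms(3) by simp
  qed
  then show ?thesis unfolding mi_degree_def using ge by (intro sum_strict_mono_ex1) auto
qed

text \<open>The rows \<open>diff_row m \<alpha>\<close> form a triangular system with nonzero diagonal when the
  multi-indices are ordered by degree; solve it by downward induction on the degree.\<close>

lemma in_power_span_delta:
  assumes "\<alpha> \<in> nonlinear_indices m n"
  shows "in_power_span m n (\<lambda>\<gamma>. if \<gamma> = \<alpha> then 1 else 0)"
  using assms
proof (induction "n - mi_degree m \<alpha>" arbitrary: \<alpha> rule: less_induct)
  case less
  let ?A = "nonlinear_indices m n"
  let ?R = "diff_row m \<alpha>"
  let ?d = "\<lambda>\<eta> \<gamma>. if \<gamma> = \<eta> then 1 else (0::real)"
  have "in_power_span m n (\<lambda>\<gamma>. \<Sum>\<eta>\<in>?A - {\<alpha>}. ?R \<eta> * ?d \<eta> \<gamma>)"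
  proof (rule lincomb_on_sum)
    fix \<eta> assume \<eta>: "\<eta> \<in> ?A - {\<alpha>}"
    show "in_power_span m n (\<lambda>\<gamma>. ?R \<eta> * ?d \<eta> \<gamma>)"
    proof (cases "?R \<eta> = 0")
      case True
      then show ?thesis using lincomb_on_zero by simp
    next
      case False
      then have "mi_degree m \<alpha> < mi_degree m \<eta>"
        using diff_row_nonzero_imp_degree_less less.prems \<eta> by blast
      moreover have "mi_degree m \<eta> \<le> n" using \<eta> by (auto simp: nonlinear_indices_iff)
      ultimately have "in_power_span m n (?d \<eta>)" using \<eta> by (intro less.hyps) auto
      then show ?thesis by (rule lincomb_on_cmult)
    qed
  qed (simp add: finite_nonlinear_indices)
  then have "in_power_span m n (\<lambda>\<gamma>. (-1) * (\<Sum>\<eta>\<in>?A - {\<alpha>}. ?R \<eta> * ?d \<eta> \<gamma>))"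
    by (rule lincomb_on_cmult)
  then have "in_power_span m n (\<lambda>\<gamma>. ?R \<gamma> + (-1) * (\<Sum>\<eta>\<in>?A - {\<alpha>}. ?R \<eta> * ?d \<eta> \<gamma>))"
    using less.prems by (intro lincomb_on_add[OF in_power_span_diff_row]) (auto simp: nonlinear_indices_def)
  then have "in_power_span m n (\<lambda>\<gamma>. (1 / ?R \<alpha>) * (?R \<gamma> + (-1) * (\<Sum>\<eta>\<in>?A - {\<alpha>}. ?R \<eta> * ?d \<eta> \<gamma>)))"
    by (rule lincomb_on_cmult)
  then show ?case
  proof (rule lincomb_on_cong)
    fix \<gamma> assume "\<gamma> \<in> ?A"
    then have "(\<Sum>\<eta>\<in>?A - {\<alpha>}. ?R \<eta> * ?d \<eta> \<gamma>) = (if \<gamma> = \<alpha> then 0 else ?R \<gamma>)"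
      using finite_nonlinear_indices by (simp add: sum.delta' if_distrib[of "\<lambda>x. _ * x"] cong: if_cong)
    then show "?d \<alpha> \<gamma> = (1 / ?R \<alpha>) * (?R \<gamma> + (-1) * (\<Sum>\<eta>\<in>?A - {\<alpha>}. ?R \<eta> * ?d \<eta> \<gamma>))"
      using diff_row_diag[of m \<alpha>] by simp
  qed
qed

definition mi_of_degree :: "nat \<Rightarrow> nat \<Rightarrow> (nat \<Rightarrow> nat) set" where
  "mi_of_degree m k = {\<gamma>. (\<forall>i\<ge>m. \<gamma> i = 0) \<and> mi_degree m \<gamma> = k}"

lemma finite_mi_of_degree: "finite (mi_of_degree m k)"
  using finite_multi_indices[of m k]
  by (rule finite_subset[rotated]) (auto simp: mi_of_degree_def multi_indices_iff)

lemma multinomial_expansion: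
  "\<exists>mc. \<forall>k. (\<forall>\<gamma>\<in>mi_of_degree m k. mc k \<gamma> > (0::real)) \<and>
      (\<forall>x::nat\<Rightarrow>real. (\<Sum>i<m. x i) ^ k = (\<Sum>\<gamma>\<in>mi_of_degree m k. mc k \<gamma> * (\<Prod>i<m. x i ^ \<gamma> i)))"
proof (induction m)
  case 0
  have "mi_of_degree 0 k = (if k = 0 then {\<lambda>_. 0} else {})" for k
    by (auto simp: mi_of_degree_def mi_degree_def)
  then show ?case by (intro exI[of _ "\<lambda>_ _. 1"]) simp
next
  case (Suc m)
  then obtain mc where mc: "\<And>k \<gamma>. \<gamma> \<in> mi_of_degree m k \<Longrightarrow> mc k \<gamma> > (0::real)"
    "\<And>k x. (\<Sum>i<m. x i) ^ k = (\<Sum>\<gamma>\<in>mi_of_degree m k. mc k \<gamma> * (\<Prod>i<m. x i ^ \<gamma> i))" by blast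
  define mc' where "mc' k \<gamma> = real (k choose \<gamma> m) * mc (k - \<gamma> m) (\<gamma>(m := 0))" for k \<gamma>
  have "mc' k \<gamma> > 0" if "\<gamma> \<in> mi_of_degree (Suc m) k" for k \<gamma>
  proof -
    have "\<gamma> m \<le> k" "\<gamma>(m := 0) \<in> mi_of_degree m (k - \<gamma> m)"
      using that by (auto simp: mi_of_degree_def mi_degree_Suc mi_degree_upd_0)
    then show ?thesis unfolding mc'_def using mc(1) by (simp add: zero_less_mult_iff)
  qed
  moreover have "(\<Sum>i<Suc m. x i) ^ k = (\<Sum>\<gamma>\<in>mi_of_degree (Suc m) k. mc' k \<gamma> * (\<Prod>i<Suc m. x i ^ \<gamma> i))"
    for k x
  proof -
    let ?Sg = "SIGMA j:{..k}. mi_of_degree m (k - j)"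
    let ?g = "\<lambda>j \<gamma>. real (k choose j) * mc (k - j) \<gamma> * (x m ^ j * (\<Prod>i<m. x i ^ \<gamma> i))"
    have "(\<Sum>i<Suc m. x i) ^ k = (x m + (\<Sum>i<m. x i)) ^ k" by (simp add: add.commute)
    also have "\<dots> = (\<Sum>j\<le>k. real (k choose j) * x m ^ j * (\<Sum>i<m. x i) ^ (k - j))"
      by (rule binomial_ring)
    also have "\<dots> = (\<Sum>j\<le>k. \<Sum>\<gamma>\<in>mi_of_degree m (k - j). ?g j \<gamma>)"
      by (intro sum.cong refl) (simp add: mc(2) sum_distrib_left mult_ac)
    also have "\<dots> = (\<Sum>(j, \<gamma>)\<in>?Sg. ?g j \<gamma>)"
      by (rule sum.Sigma) (auto simp: finite_mi_of_degree)
    also have "\<dots> = (\<Sum>\<gamma>\<in>mi_of_degree (Suc m) k. mc' k \<gamma> * (\<Prod>i<Suc m. x i ^ \<gamma> i))"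
    proof (rule sum.reindex_bij_witness[where i = "\<lambda>\<gamma>. (\<gamma> m, \<gamma>(m := 0))" and j = "\<lambda>(a, \<gamma>). \<gamma>(m := a)"])
      fix p assume "p \<in> ?Sg"
      then obtain a \<gamma> where p: "p = (a, \<gamma>)" "a \<le> k" "\<gamma> \<in> mi_of_degree m (k - a)" by blast
      then have "\<gamma> m = 0" by (simp add: mi_of_degree_def)
      then show "(\<lambda>\<gamma>. (\<gamma> m, \<gamma>(m := 0))) ((\<lambda>(a, \<gamma>). \<gamma>(m := a)) p) = p"
        and "(\<lambda>(a, \<gamma>). \<gamma>(m := a)) p \<in> mi_of_degree (Suc m) k"
        and "mc' k ((\<lambda>(a, \<gamma>). \<gamma>(m := a)) p) * (\<Prod>i<Suc m. x i ^ ((\<lambda>(a, \<gamma>). \<gamma>(m := a)) p) i)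
          = (case p of (j, \<gamma>) \<Rightarrow> ?g j \<gamma>)"
        using p by (auto simp: mi_of_degree_def mi_degree_upd mc'_def fun_upd_idem mult_ac)
    qed (auto simp: mi_of_degree_def mi_degree_Suc mi_degree_upd_0)
    finally show ?thesis .
  qed
  ultimately show ?case by blast
qed

text \<open>By the multinomial theorem the coefficient of \<open>\<xi>\<^sup>\<gamma>\<close> in \<open>(\<beta> \<cdot> \<xi>)\<^sup>k\<close> is a positive multiple
  of \<open>\<beta>\<^sup>\<gamma>\<close>, so weights \<open>\<mu>\<close> realising the unit vector at \<open>\<alpha>\<close> in the column span of
  \<open>(\<beta>\<^sup>\<gamma>)\<close> isolate the monomial \<open>\<xi>\<^sup>\<alpha>\<close>.\<close>

lemma power_sums_isolate_monomial:
  assumes "\<alpha> \<in> nonlinear_indices m n"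
  shows "\<exists>\<mu>. \<forall>k \<xi>. 2 \<le> k \<longrightarrow> k \<le> n \<longrightarrow>
     (\<Sum>\<beta>\<in>nonlinear_indices m n. \<mu> \<beta> * (\<Sum>i<m. real (\<beta> i) * \<xi> i) ^ k)
       = (if k = mi_degree m \<alpha> then (\<Prod>i<m. \<xi> i ^ \<alpha> i) else 0)"
proof -
  let ?A = "nonlinear_indices m n"
  obtain w where w: "\<And>\<gamma>. \<gamma> \<in> ?A \<Longrightarrow> (if \<gamma> = \<alpha> then 1 else 0) = (\<Sum>\<beta>\<in>?A. w \<beta> * lattice_monomial m \<gamma> \<beta>)"
    using in_power_span_delta[OF assms] unfolding lincomb_on_def by blast
  obtain MC where MC: "\<And>k \<gamma>. \<gamma> \<in> mi_of_degree m k \<Longrightarrow> MC k \<gamma> > (0::real)"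
    "\<And>k x. (\<Sum>i<m. x i) ^ k = (\<Sum>\<gamma>\<in>mi_of_degree m k. MC k \<gamma> * (\<Prod>i<m. x i ^ \<gamma> i))"
    using multinomial_expansion[of m] by blast
  define c where "c = MC (mi_degree m \<alpha>) \<alpha>"
  have \<alpha>: "\<alpha> \<in> mi_of_degree m (mi_degree m \<alpha>)"
    using assms by (auto simp: mi_of_degree_def nonlinear_indices_iff)
  then have "c > 0" unfolding c_def by (rule MC(1))
  have "(\<Sum>\<beta>\<in>?A. w \<beta> / c * (\<Sum>i<m. real (\<beta> i) * \<xi> i) ^ k)
      = (if k = mi_degree m \<alpha> then \<Prod>i<m. \<xi> i ^ \<alpha> i else 0)"
    if k: "2 \<le> k" "k \<le> n" for k \<xi>
  proof -
    let ?mon = "\<lambda>\<gamma>. \<Prod>i<m. \<xi> i ^ \<gamma> i"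
    have "(\<Sum>\<beta>\<in>?A. w \<beta> / c * (\<Sum>i<m. real (\<beta> i) * \<xi> i) ^ k)
        = (\<Sum>\<beta>\<in>?A. \<Sum>\<gamma>\<in>mi_of_degree m k. MC k \<gamma> * ?mon \<gamma> / c * (w \<beta> * lattice_monomial m \<gamma> \<beta>))"
      by (intro sum.cong refl)
         (simp add: MC(2) lattice_monomial_def power_mult_distrib prod.distrib sum_distrib_left mult_ac)
    also have "\<dots> = (\<Sum>\<gamma>\<in>mi_of_degree m k. MC k \<gamma> * ?mon \<gamma> / c * (\<Sum>\<beta>\<in>?A. w \<beta> * lattice_monomial m \<gamma> \<beta>))"
      by (subst sum.swap) (simp add: sum_distrib_left)
    also have "\<dots> = (\<Sum>\<gamma>\<in>mi_of_degree m k. if \<alpha> = \<gamma> then MC k \<gamma> * ?mon \<gamma> / c else 0)"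
    proof (intro sum.cong refl)
      fix \<gamma> assume "\<gamma> \<in> mi_of_degree m k"
      then have "\<gamma> \<in> ?A" using k by (auto simp: mi_of_degree_def nonlinear_indices_iff)
      then show "MC k \<gamma> * ?mon \<gamma> / c * (\<Sum>\<beta>\<in>?A. w \<beta> * lattice_monomial m \<gamma> \<beta>)
          = (if \<alpha> = \<gamma> then MC k \<gamma> * ?mon \<gamma> / c else 0)"
        by (simp add: w[symmetric])
    qed
    also have "\<dots> = (if k = mi_degree m \<alpha> then ?mon \<alpha> else 0)"
      using \<open>c > 0\<close> \<alpha> by (simp add: sum.delta'[OF finite_mi_of_degree] c_def)
         (auto simp: mi_of_degree_def)
    finally show ?thesis .
  qed
  then show ?thesis by (intro exI[of _ "\<lambda>\<beta>. w \<beta> / c"]) blast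
qed

section \<open>Shallow networks\<close>

definition shallow_net :: "(real \<Rightarrow> real) \<Rightarrow> nat \<Rightarrow> nat \<Rightarrow> real \<Rightarrow> (nat \<Rightarrow> real) \<Rightarrow> (nat \<Rightarrow> real)
    \<Rightarrow> (nat \<Rightarrow> nat \<Rightarrow> real) \<Rightarrow> (nat \<Rightarrow> real) \<Rightarrow> real" where
  "shallow_net \<psi> m N c a b W u = c + (\<Sum>j<N. a j * \<psi> (b j + (\<Sum>t<m. W j t * u t)))"

abbreviation poly_eval :: "nat \<Rightarrow> nat \<Rightarrow> ((nat \<Rightarrow> nat) \<Rightarrow> real) \<Rightarrow> (nat \<Rightarrow> real) \<Rightarrow> real" where
  "poly_eval m n cf u \<equiv> \<Sum>\<alpha>\<in>multi_indices m n. cf \<alpha> * (\<Prod>i<m. u i ^ \<alpha> i)"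

lemma abs_lincomb_le:
  fixes u v :: "nat \<Rightarrow> real"
  assumes "\<forall>t<m. \<bar>u t\<bar> \<le> R"
  shows "\<bar>\<Sum>t<m. v t * u t\<bar> \<le> (\<Sum>t<m. \<bar>v t\<bar>) * R"
proof -
  have "\<bar>\<Sum>t<m. v t * u t\<bar> \<le> (\<Sum>t<m. \<bar>v t\<bar> * \<bar>u t\<bar>)"
    by (rule order.trans[OF sum_abs]) (simp add: abs_mult)
  also have "\<dots> \<le> (\<Sum>t<m. \<bar>v t\<bar> * R)"
    using assms by (intro sum_mono mult_left_mono) auto
  finally show ?thesis by (simp add: sum_distrib_right)
qed

lemma abs_nonlinear_index_dot_le:
  assumes "\<beta> \<in> nonlinear_indices m n" "\<forall>t<m. \<bar>u t\<bar> \<le> R" "R \<ge> 0"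
  shows "\<bar>\<Sum>t<m. real (\<beta> t) * u t\<bar> \<le> real n * R"
proof -
  have "\<bar>\<Sum>t<m. real (\<beta> t) * u t\<bar> \<le> real (mi_degree m \<beta>) * R"
    using abs_lincomb_le[OF assms(2), of "\<lambda>t. real (\<beta> t)"] by (simp add: mi_degree_def)
  also have "\<dots> \<le> real n * R"
    using assms(1,3) by (intro mult_right_mono) (auto simp: nonlinear_indices_iff)
  finally show ?thesis .
qed

text \<open>The weights \<open>\<omega>\<close> make the Taylor terms of orders \<open>2, \<dots>, n\<close> of the neurons
  \<open>\<psi>(b + h \<beta> \<cdot> u)\<close> add up to the nonlinear part of the polynomial.\<close>

lemma taylor_terms_weighted_power_sum:
  fixes cf :: "(nat \<Rightarrow> nat) \<Rightarrow> real" and D :: "nat \<Rightarrow> real"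
  assumes l: "2 \<le> l" "l \<le> n" and "D l \<noteq> 0" "h \<noteq> 0"
    and \<mu>: "\<And>\<alpha>. \<alpha> \<in> nonlinear_indices m n \<Longrightarrow>
       (\<Sum>\<beta>\<in>nonlinear_indices m n. \<mu> \<alpha> \<beta> * (\<Sum>t<m. real (\<beta> t) * u t) ^ l)
         = (if l = mi_degree m \<alpha> then (\<Prod>i<m. u i ^ \<alpha> i) else 0)"
  defines "\<omega> \<equiv> \<lambda>\<beta>. \<Sum>\<alpha>\<in>nonlinear_indices m n.
      cf \<alpha> * fact (mi_degree m \<alpha>) / (D (mi_degree m \<alpha>) * h ^ mi_degree m \<alpha>) * \<mu> \<alpha> \<beta>"
  shows "D l / fact l * h ^ l * (\<Sum>\<beta>\<in>nonlinear_indices m n. \<omega> \<beta> * (\<Sum>t<m. real (\<beta> t) * u t) ^ l)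
    = (\<Sum>\<alpha>\<in>nonlinear_indices m n. if l = mi_degree m \<alpha> then cf \<alpha> * (\<Prod>i<m. u i ^ \<alpha> i) else 0)"
proof -
  let ?A = "nonlinear_indices m n"
  let ?w = "\<lambda>\<alpha>. cf \<alpha> * fact (mi_degree m \<alpha>) / (D (mi_degree m \<alpha>) * h ^ mi_degree m \<alpha>)"
  let ?mon = "\<lambda>\<alpha>. \<Prod>i<m. u i ^ \<alpha> i"
  have "(\<Sum>\<beta>\<in>?A. \<omega> \<beta> * (\<Sum>t<m. real (\<beta> t) * u t) ^ l)
      = (\<Sum>\<alpha>\<in>?A. ?w \<alpha> * (\<Sum>\<beta>\<in>?A. \<mu> \<alpha> \<beta> * (\<Sum>t<m. real (\<beta> t) * u t) ^ l))"
    unfolding \<omega>_def sum_distrib_left sum_distrib_right by (subst sum.swap) (simp add: mult.assoc)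
  also have "\<dots> = (\<Sum>\<alpha>\<in>?A. ?w \<alpha> * (if l = mi_degree m \<alpha> then ?mon \<alpha> else 0))"
    by (intro sum.cong refl) (simp add: \<mu>)
  finally have "D l / fact l * h ^ l * (\<Sum>\<beta>\<in>?A. \<omega> \<beta> * (\<Sum>t<m. real (\<beta> t) * u t) ^ l)
      = (\<Sum>\<alpha>\<in>?A. D l / fact l * h ^ l * (?w \<alpha> * (if l = mi_degree m \<alpha> then ?mon \<alpha> else 0)))"
    by (simp only: sum_distrib_left)
  also have "\<dots> = (\<Sum>\<alpha>\<in>?A. if l = mi_degree m \<alpha> then cf \<alpha> * ?mon \<alpha> else 0)"
    using assms(3,4) by (intro sum.cong refl) auto
  finally show ?thesis .
qed

lemma taylor_poly_weighted_sum:
  fixes cf :: "(nat \<Rightarrow> nat) \<Rightarrow> real" and D :: "nat \<Rightarrow> real"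
  assumes "1 \<le> n" and D: "\<And>l. 2 \<le> l \<Longrightarrow> l \<le> n \<Longrightarrow> D l \<noteq> 0" and "h \<noteq> 0"
    and \<mu>: "\<And>\<alpha> l. \<alpha> \<in> nonlinear_indices m n \<Longrightarrow> 2 \<le> l \<Longrightarrow> l \<le> n \<Longrightarrow>
       (\<Sum>\<beta>\<in>nonlinear_indices m n. \<mu> \<alpha> \<beta> * (\<Sum>t<m. real (\<beta> t) * u t) ^ l)
         = (if l = mi_degree m \<alpha> then (\<Prod>i<m. u i ^ \<alpha> i) else 0)"
  defines "\<omega> \<equiv> \<lambda>\<beta>. \<Sum>\<alpha>\<in>nonlinear_indices m n.
      cf \<alpha> * fact (mi_degree m \<alpha>) / (D (mi_degree m \<alpha>) * h ^ mi_degree m \<alpha>) * \<mu> \<alpha> \<beta>"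
  shows "(\<Sum>\<beta>\<in>nonlinear_indices m n. \<omega> \<beta> * (\<Sum>l\<le>n. D l / fact l * (h * (\<Sum>t<m. real (\<beta> t) * u t)) ^ l))
    = D 0 * (\<Sum>\<beta>\<in>nonlinear_indices m n. \<omega> \<beta>)
      + (\<Sum>t<m. (D 1 * h * (\<Sum>\<beta>\<in>nonlinear_indices m n. \<omega> \<beta> * real (\<beta> t))) * u t)
      + (\<Sum>\<alpha>\<in>nonlinear_indices m n. cf \<alpha> * (\<Prod>i<m. u i ^ \<alpha> i))"
proof -
  let ?A = "nonlinear_indices m n"
  let ?S = "\<lambda>l. \<Sum>\<beta>\<in>?A. \<omega> \<beta> * (\<Sum>t<m. real (\<beta> t) * u t) ^ l"
  have "(\<Sum>\<beta>\<in>?A. \<omega> \<beta> * (\<Sum>l\<le>n. D l / fact l * (h * (\<Sum>t<m. real (\<beta> t) * u t)) ^ l))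
      = (\<Sum>l\<le>n. D l / fact l * h ^ l * ?S l)"
  proof -
    have "\<omega> \<beta> * (\<Sum>l\<le>n. D l / fact l * (h * (\<Sum>t<m. real (\<beta> t) * u t)) ^ l)
        = (\<Sum>l\<le>n. D l / fact l * h ^ l * (\<omega> \<beta> * (\<Sum>t<m. real (\<beta> t) * u t) ^ l))" for \<beta>
      by (simp only: power_mult_distrib) (simp add: sum_distrib_left mult_ac)
    then show ?thesis by (simp add: sum.swap[of _ _ "{..n}"] sum_distrib_left)
  qed
  also have "\<dots> = D 0 * ?S 0 + D 1 * h * ?S 1 + (\<Sum>l\<in>{2..n}. D l / fact l * h ^ l * ?S l)"
  proof -
    have "{..n} = insert 0 (insert 1 {2..n})" using \<open>1 \<le> n\<close> by auto
    then show ?thesis by (simp add: add.assoc)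
  qed
  also have "D 1 * h * ?S 1 = (\<Sum>t<m. (D 1 * h * (\<Sum>\<beta>\<in>?A. \<omega> \<beta> * real (\<beta> t))) * u t)"
    unfolding power_one_right sum_distrib_left sum_distrib_right
    by (subst sum.swap) (simp add: mult_ac)
  also have "(\<Sum>l\<in>{2..n}. D l / fact l * h ^ l * ?S l)
      = (\<Sum>l\<in>{2..n}. \<Sum>\<alpha>\<in>?A. if l = mi_degree m \<alpha> then cf \<alpha> * (\<Prod>i<m. u i ^ \<alpha> i) else 0)"
    unfolding \<omega>_def using D \<open>h \<noteq> 0\<close> \<mu>
    by (intro sum.cong refl taylor_terms_weighted_power_sum) auto
  also have "\<dots> = (\<Sum>\<alpha>\<in>?A. cf \<alpha> * (\<Prod>i<m. u i ^ \<alpha> i))"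
    by (subst sum.swap) (auto intro!: sum.cong simp: nonlinear_indices_iff)
  finally show ?thesis by simp
qed

lemma weighted_taylor_remainder_le:
  fixes \<omega> :: "(nat \<Rightarrow> nat) \<Rightarrow> real"
  assumes taylor: "\<And>t. \<bar>t\<bar> < \<delta> \<Longrightarrow> \<bar>\<psi> (b + t) - (\<Sum>l\<le>n. D l / fact l * t ^ l)\<bar> \<le> \<eta> * \<bar>t\<bar> ^ n"
    and "\<eta> \<ge> 0" "h > 0" "R \<ge> 0" "h * (real n * R) < \<delta>" and u: "\<forall>t<m. \<bar>u t\<bar> \<le> R"
  shows "\<bar>\<Sum>\<beta>\<in>nonlinear_indices m n. \<omega> \<beta> * (\<psi> (b + h * (\<Sum>t<m. real (\<beta> t) * u t))
      - (\<Sum>l\<le>n. D l / fact l * (h * (\<Sum>t<m. real (\<beta> t) * u t)) ^ l))\<bar>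
    \<le> \<eta> * (real n * R) ^ n * (\<Sum>\<beta>\<in>nonlinear_indices m n. \<bar>\<omega> \<beta>\<bar> * h ^ n)"
proof -
  let ?t = "\<lambda>\<beta>. h * (\<Sum>t<m. real (\<beta> t) * u t)"
  have "\<bar>\<omega> \<beta> * (\<psi> (b + ?t \<beta>) - (\<Sum>l\<le>n. D l / fact l * ?t \<beta> ^ l))\<bar>
      \<le> \<eta> * (real n * R) ^ n * (\<bar>\<omega> \<beta>\<bar> * h ^ n)"
    if \<beta>: "\<beta> \<in> nonlinear_indices m n" for \<beta>
  proof -
    have le: "\<bar>?t \<beta>\<bar> \<le> h * (real n * R)"
      using abs_nonlinear_index_dot_le[OF \<beta> u \<open>R \<ge> 0\<close>] \<open>h > 0\<close> by (simp add: abs_mult)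
    then have "\<bar>?t \<beta>\<bar> < \<delta>" using \<open>h * (real n * R) < \<delta>\<close> by linarith
    then have "\<bar>\<psi> (b + ?t \<beta>) - (\<Sum>l\<le>n. D l / fact l * ?t \<beta> ^ l)\<bar> \<le> \<eta> * \<bar>?t \<beta>\<bar> ^ n"
      by (rule taylor)
    also have "\<dots> \<le> \<eta> * (h * (real n * R)) ^ n"
      using le \<open>\<eta> \<ge> 0\<close> by (intro mult_left_mono power_mono) auto
    finally have "\<bar>\<omega> \<beta>\<bar> * \<bar>\<psi> (b + ?t \<beta>) - (\<Sum>l\<le>n. D l / fact l * ?t \<beta> ^ l)\<bar>
        \<le> \<bar>\<omega> \<beta>\<bar> * (\<eta> * (h * (real n * R)) ^ n)"
      by (rule mult_left_mono) simp
    then show ?thesis by (simp add: abs_mult power_mult_distrib mult_ac)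
  qed
  then show ?thesis
    unfolding sum_distrib_left by (intro order.trans[OF sum_abs] sum_mono)
qed

lemma scaled_weight_le:
  fixes cf \<mu> :: "(nat \<Rightarrow> nat) \<Rightarrow> real" and D :: "nat \<Rightarrow> real"
  assumes "0 < h" "h \<le> 1"
  shows "\<bar>\<Sum>\<alpha>\<in>nonlinear_indices m n. cf \<alpha> * fact (mi_degree m \<alpha>) / (D (mi_degree m \<alpha>) * h ^ mi_degree m \<alpha>) * \<mu> \<alpha>\<bar> * h ^ n
    \<le> (\<Sum>\<alpha>\<in>nonlinear_indices m n. \<bar>cf \<alpha>\<bar> * fact (mi_degree m \<alpha>) / \<bar>D (mi_degree m \<alpha>)\<bar> * \<bar>\<mu> \<alpha>\<bar>)"
proof -
  let ?A = "nonlinear_indices m n"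
  have "\<bar>\<Sum>\<alpha>\<in>?A. cf \<alpha> * fact (mi_degree m \<alpha>) / (D (mi_degree m \<alpha>) * h ^ mi_degree m \<alpha>) * \<mu> \<alpha>\<bar> * h ^ n
      \<le> (\<Sum>\<alpha>\<in>?A. \<bar>cf \<alpha> * fact (mi_degree m \<alpha>) / (D (mi_degree m \<alpha>) * h ^ mi_degree m \<alpha>) * \<mu> \<alpha>\<bar>) * h ^ n"
    using assms by (intro mult_right_mono sum_abs) auto
  also have "\<dots> = (\<Sum>\<alpha>\<in>?A. \<bar>cf \<alpha>\<bar> * fact (mi_degree m \<alpha>) / \<bar>D (mi_degree m \<alpha>)\<bar> * \<bar>\<mu> \<alpha>\<bar>
      * (h ^ n / h ^ mi_degree m \<alpha>))"
    unfolding sum_distrib_right using assms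
    by (intro sum.cong refl) (simp add: abs_mult abs_divide field_simps)
  also have "\<dots> \<le> (\<Sum>\<alpha>\<in>?A. \<bar>cf \<alpha>\<bar> * fact (mi_degree m \<alpha>) / \<bar>D (mi_degree m \<alpha>)\<bar> * \<bar>\<mu> \<alpha>\<bar>)"
    using assms
    by (intro sum_mono mult_left_le) (auto simp: nonlinear_indices_iff divide_le_eq_1 power_decreasing)
  finally show ?thesis .
qed

text \<open>The weights \<open>\<omega>\<close> grow like \<open>h\<^sup>-\<^sup>n\<close> as the scale \<open>h \<le> 1\<close> shrinks, but the Taylor remainder
  at \<open>h \<beta> \<cdot> u\<close> is \<open>o(h\<^sup>n)\<close>; so \<open>h\<close> is chosen last, after the tolerance \<open>\<eta>\<close>.\<close>

lemma shallow_nonlinear_approx: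
  fixes cf :: "(nat \<Rightarrow> nat) \<Rightarrow> real"
  assumes Cn: "C_n n \<psi>" and "1 \<le> n" and bD: "\<And>j. 1 \<le> j \<Longrightarrow> j \<le> n \<Longrightarrow> (deriv ^^ j) \<psi> b \<noteq> 0"
    and "R > 0" "\<epsilon> > 0"
  shows "\<exists>\<omega> h \<kappa> L. \<forall>u. (\<forall>t<m. \<bar>u t\<bar> \<le> R) \<longrightarrow>
     \<bar>(\<Sum>\<beta>\<in>nonlinear_indices m n. \<omega> \<beta> * \<psi> (b + h * (\<Sum>t<m. real (\<beta> t) * u t)))
       - (\<kappa> + (\<Sum>t<m. L t * u t) + (\<Sum>\<alpha>\<in>nonlinear_indices m n. cf \<alpha> * (\<Prod>i<m. u i ^ \<alpha> i)))\<bar> < \<epsilon>"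
proof -
  let ?A = "nonlinear_indices m n"
  let ?dot = "\<lambda>\<beta> u. \<Sum>t<m. real (\<beta> t) * u t"
  define D where "D l = (deriv ^^ l) \<psi> b" for l
  have "\<forall>\<alpha>\<in>?A. \<exists>\<mu>. \<forall>k \<xi>. 2 \<le> k \<longrightarrow> k \<le> n \<longrightarrow> (\<Sum>\<beta>\<in>?A. \<mu> \<beta> * ?dot \<beta> \<xi> ^ k)
      = (if k = mi_degree m \<alpha> then (\<Prod>i<m. \<xi> i ^ \<alpha> i) else 0)"
    using power_sums_isolate_monomial by blast
  then obtain \<mu> where "\<forall>\<alpha>\<in>?A. \<forall>k \<xi>. 2 \<le> k \<longrightarrow> k \<le> n \<longrightarrow>
      (\<Sum>\<beta>\<in>?A. \<mu> \<alpha> \<beta> * ?dot \<beta> \<xi> ^ k) = (if k = mi_degree m \<alpha> then (\<Prod>i<m. \<xi> i ^ \<alpha> i) else 0)"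
    by (rule bchoice[THEN exE])
  then have \<mu>: "\<And>\<alpha> k \<xi>. \<alpha> \<in> ?A \<Longrightarrow> 2 \<le> k \<Longrightarrow> k \<le> n \<Longrightarrow>
      (\<Sum>\<beta>\<in>?A. \<mu> \<alpha> \<beta> * ?dot \<beta> \<xi> ^ k) = (if k = mi_degree m \<alpha> then (\<Prod>i<m. \<xi> i ^ \<alpha> i) else 0)"
    by blast
  define \<Lambda> where "\<Lambda> \<beta> = (\<Sum>\<alpha>\<in>?A. \<bar>cf \<alpha>\<bar> * fact (mi_degree m \<alpha>) / \<bar>D (mi_degree m \<alpha>)\<bar> * \<bar>\<mu> \<alpha> \<beta>\<bar>)" for \<beta>
  define K where "K = (real n * R) ^ n * (\<Sum>\<beta>\<in>?A. \<Lambda> \<beta>)"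
  have "K \<ge> 0" unfolding K_def \<Lambda>_def using \<open>R > 0\<close> by (intro mult_nonneg_nonneg sum_nonneg) auto
  define \<eta> where "\<eta> = \<epsilon> / (K + 1)"
  have "\<eta> > 0" using \<open>\<epsilon> > 0\<close> \<open>K \<ge> 0\<close> by (simp add: \<eta>_def)
  then obtain \<delta> where \<delta>: "\<delta> > 0"
    "\<And>t. \<bar>t\<bar> < \<delta> \<Longrightarrow> \<bar>\<psi> (b + t) - (\<Sum>l\<le>n. D l / fact l * t ^ l)\<bar> \<le> \<eta> * \<bar>t\<bar> ^ n"
    using C_n_taylor_remainder[OF Cn \<open>1 \<le> n\<close> order.refl] unfolding D_def by blast
  define h where "h = min 1 (\<delta> / (real n * R + 1))"
  have "real n * R \<ge> 0" using \<open>R > 0\<close> by simp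
  have "h * (real n * R) \<le> \<delta> / (real n * R + 1) * (real n * R)"
    using \<open>real n * R \<ge> 0\<close> by (intro mult_right_mono) (auto simp: h_def)
  also have "\<dots> < \<delta>" using \<delta>(1) \<open>real n * R \<ge> 0\<close> by (simp add: field_simps)
  finally have h: "0 < h" "h \<le> 1" "h * (real n * R) < \<delta>"
    using \<delta>(1) \<open>real n * R \<ge> 0\<close> by (auto simp: h_def)
  define \<omega> where "\<omega> \<beta> = (\<Sum>\<alpha>\<in>?A. cf \<alpha> * fact (mi_degree m \<alpha>) / (D (mi_degree m \<alpha>) * h ^ mi_degree m \<alpha>) * \<mu> \<alpha> \<beta>)"
    for \<beta>
  define \<kappa> where "\<kappa> = D 0 * (\<Sum>\<beta>\<in>?A. \<omega> \<beta>)"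
  define L where "L t = D 1 * h * (\<Sum>\<beta>\<in>?A. \<omega> \<beta> * real (\<beta> t))" for t
  have "\<bar>(\<Sum>\<beta>\<in>?A. \<omega> \<beta> * \<psi> (b + h * ?dot \<beta> u))
      - (\<kappa> + (\<Sum>t<m. L t * u t) + (\<Sum>\<alpha>\<in>?A. cf \<alpha> * (\<Prod>i<m. u i ^ \<alpha> i)))\<bar> < \<epsilon>"
    if u: "\<forall>t<m. \<bar>u t\<bar> \<le> R" for u
  proof -
    have "\<bar>\<Sum>\<beta>\<in>?A. \<omega> \<beta> * (\<psi> (b + h * ?dot \<beta> u) - (\<Sum>l\<le>n. D l / fact l * (h * ?dot \<beta> u) ^ l))\<bar>
        \<le> \<eta> * (real n * R) ^ n * (\<Sum>\<beta>\<in>?A. \<bar>\<omega> \<beta>\<bar> * h ^ n)"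
      using \<delta>(2) \<open>\<eta> > 0\<close> h \<open>R > 0\<close> u by (intro weighted_taylor_remainder_le) auto
    also have "\<dots> \<le> \<eta> * (real n * R) ^ n * (\<Sum>\<beta>\<in>?A. \<Lambda> \<beta>)"
      unfolding \<omega>_def \<Lambda>_def using h(1,2) \<open>\<eta> > 0\<close> \<open>R > 0\<close>
      by (intro mult_left_mono sum_mono scaled_weight_le) auto
    also have "\<dots> = \<eta> * K" by (simp add: K_def)
    also have "\<dots> < \<epsilon>" using \<open>K \<ge> 0\<close> \<open>\<epsilon> > 0\<close> by (simp add: \<eta>_def field_simps)
    finally have "\<bar>\<Sum>\<beta>\<in>?A. \<omega> \<beta> * (\<psi> (b + h * ?dot \<beta> u)
      - (\<Sum>l\<le>n. D l / fact l * (h * ?dot \<beta> u) ^ l))\<bar> < \<epsilon>" .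
    moreover have "(\<Sum>\<beta>\<in>?A. \<omega> \<beta> * (\<Sum>l\<le>n. D l / fact l * (h * ?dot \<beta> u) ^ l))
        = \<kappa> + (\<Sum>t<m. L t * u t) + (\<Sum>\<alpha>\<in>?A. cf \<alpha> * (\<Prod>i<m. u i ^ \<alpha> i))"
      unfolding \<omega>_def \<kappa>_def L_def using \<open>1 \<le> n\<close> bD h(1) \<mu>
      by (intro taylor_poly_weighted_sum) (auto simp: D_def)
    ultimately show ?thesis
      by (simp add: right_diff_distrib sum_subtractf)
  qed
  then show ?thesis by blast
qed

text \<open>One extra neuron, an approximate identity along the linear form \<open>v\<close>, supplies the
  linear part of the polynomial that the nonlinear neurons do not already produce.\<close>

lemma shallow_approx:
  fixes cf :: "(nat \<Rightarrow> nat) \<Rightarrow> real"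
  assumes Cn: "C_n n \<psi>" and "1 \<le> n" and bD: "\<And>j. 1 \<le> j \<Longrightarrow> j \<le> n \<Longrightarrow> (deriv ^^ j) \<psi> b \<noteq> 0"
    and "R > 0" "\<epsilon> > 0"
  shows "\<exists>c a bb W. \<forall>u. (\<forall>t<m. \<bar>u t\<bar> \<le> R) \<longrightarrow>
    \<bar>shallow_net \<psi> m (card (nonlinear_indices m n) + 1) c a bb W u - poly_eval m n cf u\<bar> < \<epsilon>"
proof -
  let ?A = "nonlinear_indices m n"
  let ?dot = "\<lambda>\<beta> u. \<Sum>t<m. real (\<beta> t) * u t"
  let ?D1 = "deriv \<psi> b"
  obtain \<omega> h \<kappa> L where nonlin: "\<And>u. \<forall>t<m. \<bar>u t\<bar> \<le> R \<Longrightarrow>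
     \<bar>(\<Sum>\<beta>\<in>?A. \<omega> \<beta> * \<psi> (b + h * ?dot \<beta> u))
       - (\<kappa> + (\<Sum>t<m. L t * u t) + (\<Sum>\<alpha>\<in>?A. cf \<alpha> * (\<Prod>i<m. u i ^ \<alpha> i)))\<bar> < \<epsilon> / 2"
    using shallow_nonlinear_approx[where \<epsilon> = "\<epsilon> / 2" and cf = cf and m = m, OF Cn \<open>1 \<le> n\<close> bD \<open>R > 0\<close>] \<open>\<epsilon> > 0\<close> by auto
  define v where "v t = cf (mi_unit t) - L t" for t
  define V where "V = (\<Sum>t<m. \<bar>v t\<bar>)"
  have "?D1 \<noteq> 0" using bD[of 1] \<open>1 \<le> n\<close> by simp
  moreover have "V * R \<ge> 0" using \<open>R > 0\<close> by (simp add: V_def sum_nonneg)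
  ultimately obtain s where "s > 0"
    and s: "\<And>y. \<bar>y\<bar> \<le> V * R \<Longrightarrow> \<bar>act_rescaled \<psi> b s y - y\<bar> \<le> \<epsilon> / 4"
    using act_rescaled_approx_id[OF Cn \<open>1 \<le> n\<close>, of b "V * R" "\<epsilon> / 4"] \<open>\<epsilon> > 0\<close> by auto
  obtain enum where enum: "bij_betw enum {..<card ?A} ?A"
    using ex_bij_betw_nat_finite[OF finite_nonlinear_indices] by (auto simp: atLeast0LessThan)
  define a where "a j = (if j = 0 then 1 / (s * ?D1) else \<omega> (enum (j - 1)))" for j
  define W where "W j t = (if j = 0 then s * v t else h * real (enum (j - 1) t))" for j t
  define c where "c = cf (\<lambda>_. 0) - \<kappa> - \<psi> b / (s * ?D1)"
  have "\<bar>shallow_net \<psi> m (card ?A + 1) c a (\<lambda>_. b) W u - poly_eval m n cf u\<bar> < \<epsilon>"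
    if u: "\<forall>t<m. \<bar>u t\<bar> \<le> R" for u
  proof -
    let ?vu = "\<Sum>t<m. v t * u t"
    have "(\<Sum>j<card ?A. a (Suc j) * \<psi> (b + (\<Sum>t<m. W (Suc j) t * u t)))
        = (\<Sum>j<card ?A. \<omega> (enum j) * \<psi> (b + h * ?dot (enum j) u))"
      by (simp add: a_def W_def sum_distrib_left mult.assoc)
    also have "\<dots> = (\<Sum>\<beta>\<in>?A. \<omega> \<beta> * \<psi> (b + h * ?dot \<beta> u))"
      by (rule sum.reindex_bij_betw[OF enum])
    finally have "shallow_net \<psi> m (card ?A + 1) c a (\<lambda>_. b) W u
        = c + a 0 * \<psi> (b + (\<Sum>t<m. W 0 t * u t)) + (\<Sum>\<beta>\<in>?A. \<omega> \<beta> * \<psi> (b + h * ?dot \<beta> u))"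
      unfolding shallow_net_def Suc_eq_plus1[symmetric] sum.lessThan_Suc_shift by simp
    also have "c + a 0 * \<psi> (b + (\<Sum>t<m. W 0 t * u t)) = cf (\<lambda>_. 0) - \<kappa> + act_rescaled \<psi> b s ?vu"
      by (simp add: a_def W_def c_def act_rescaled_def sum_distrib_left mult.assoc diff_divide_distrib)
    finally have "shallow_net \<psi> m (card ?A + 1) c a (\<lambda>_. b) W u
        = cf (\<lambda>_. 0) - \<kappa> + act_rescaled \<psi> b s ?vu + (\<Sum>\<beta>\<in>?A. \<omega> \<beta> * \<psi> (b + h * ?dot \<beta> u))" .
    moreover have "poly_eval m n cf u
        = cf (\<lambda>_. 0) + ?vu + (\<Sum>t<m. L t * u t) + (\<Sum>\<alpha>\<in>?A. cf \<alpha> * (\<Prod>i<m. u i ^ \<alpha> i))"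
      unfolding sum_multi_indices_decomp[OF \<open>1 \<le> n\<close>]
      by (simp add: monomial_mi_unit v_def left_diff_distrib sum_subtractf)
    moreover have "\<bar>act_rescaled \<psi> b s ?vu - ?vu\<bar> \<le> \<epsilon> / 4"
      using abs_lincomb_le[OF u, of v] by (intro s) (simp add: V_def)
    ultimately show ?thesis using nonlin[OF u] by linarith
  qed
  then show ?thesis by blast
qed

lemma shallow_net_uniform_continuity:
  assumes "continuous_on UNIV \<psi>" "R \<ge> 0" "e > 0"
  shows "\<exists>\<eta>>0. \<forall>u u'. (\<forall>t<m. \<bar>u t\<bar> \<le> R) \<longrightarrow> (\<forall>t<m. \<bar>u' t - u t\<bar> \<le> \<eta>) \<longrightarrow>
    \<bar>shallow_net \<psi> m N c a b W u' - shallow_net \<psi> m N c a b W u\<bar> < e"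
proof -
  define WS where "WS = (\<Sum>j<N. \<Sum>t<m. \<bar>W j t\<bar>)"
  define M where "M = (\<Sum>j<N. \<bar>b j\<bar>) + WS * (R + 1)"
  define SA where "SA = (\<Sum>j<N. \<bar>a j\<bar>)"
  have "WS \<ge> 0" "SA \<ge> 0" unfolding WS_def SA_def by (auto intro: sum_nonneg)
  have row: "(\<Sum>t<m. \<bar>W j t\<bar>) \<le> WS" "\<bar>b j\<bar> \<le> (\<Sum>j<N. \<bar>b j\<bar>)" if "j < N" for j
    unfolding WS_def using that by (auto intro!: member_le_sum sum_nonneg)
  have "uniformly_continuous_on (cball 0 M) \<psi>"
    by (rule compact_uniformly_continuous[OF continuous_on_subset[OF assms(1)]]) auto
  moreover have "e / (SA + 1) > 0" using assms(3) \<open>SA \<ge> 0\<close> by simp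
  ultimately obtain d where "d > 0" and d: "\<And>z z'. z \<in> cball 0 M \<Longrightarrow> z' \<in> cball 0 M \<Longrightarrow>
      \<bar>z' - z\<bar> < d \<Longrightarrow> \<bar>\<psi> z' - \<psi> z\<bar> < e / (SA + 1)"
    unfolding uniformly_continuous_on_def dist_real_def by metis
  define \<eta> where "\<eta> = min 1 (d / (WS + 1))"
  have "\<eta> > 0" "\<eta> \<le> 1" using \<open>d > 0\<close> \<open>WS \<ge> 0\<close> by (auto simp: \<eta>_def)
  have "WS * \<eta> < d"
  proof -
    have "WS * \<eta> \<le> WS * (d / (WS + 1))" using \<open>WS \<ge> 0\<close> by (intro mult_left_mono) (auto simp: \<eta>_def)
    also have "\<dots> < d" using \<open>WS \<ge> 0\<close> \<open>d > 0\<close> by (simp add: field_simps)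
    finally show ?thesis .
  qed
  have "\<bar>shallow_net \<psi> m N c a b W u' - shallow_net \<psi> m N c a b W u\<bar> < e"
    if u: "\<forall>t<m. \<bar>u t\<bar> \<le> R" and u': "\<forall>t<m. \<bar>u' t - u t\<bar> \<le> \<eta>" for u u'
  proof -
    have "\<bar>u' t\<bar> \<le> R + 1" if "t < m" for t
      using abs_triangle_ineq[of "u t" "u' t - u t"] u u' that \<open>\<eta> \<le> 1\<close> by fastforce
    moreover have "\<forall>t<m. \<bar>u t\<bar> \<le> R + 1" using u by (simp add: add_increasing2)
    ultimately have "\<forall>t<m. \<bar>u t\<bar> \<le> R + 1" "\<forall>t<m. \<bar>u' t\<bar> \<le> R + 1" by auto
    have bound: "\<bar>\<Sum>t<m. W j t * w t\<bar> \<le> WS * (R + 1)" if "\<forall>t<m. \<bar>w t\<bar> \<le> R + 1" "j < N" for w j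
    proof -
      have "\<bar>\<Sum>t<m. W j t * w t\<bar> \<le> (\<Sum>t<m. \<bar>W j t\<bar>) * (R + 1)"
        by (rule abs_lincomb_le[OF that(1)])
      also have "\<dots> \<le> WS * (R + 1)" using row(1)[OF that(2)] assms(2) by (intro mult_right_mono) auto
      finally show ?thesis .
    qed
    have "\<bar>\<psi> (b j + (\<Sum>t<m. W j t * u' t)) - \<psi> (b j + (\<Sum>t<m. W j t * u t))\<bar> < e / (SA + 1)"
      if j: "j < N" for j
    proof (rule d)
      show "b j + (\<Sum>t<m. W j t * u t) \<in> cball 0 M" "b j + (\<Sum>t<m. W j t * u' t) \<in> cball 0 M"
        using bound[OF _ j] \<open>\<forall>t<m. \<bar>u t\<bar> \<le> R + 1\<close> \<open>\<forall>t<m. \<bar>u' t\<bar> \<le> R + 1\<close> row(2)[OF j]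
        by (fastforce simp: M_def)+
      have "\<bar>(\<Sum>t<m. W j t * u' t) - (\<Sum>t<m. W j t * u t)\<bar> \<le> (\<Sum>t<m. \<bar>W j t\<bar>) * \<eta>"
        using abs_lincomb_le[OF u', of "W j"] by (simp add: sum_subtractf right_diff_distrib)
      also have "\<dots> \<le> WS * \<eta>" using row(1)[OF j] \<open>\<eta> > 0\<close> by (simp add: mult_right_mono)
      finally show "\<bar>b j + (\<Sum>t<m. W j t * u' t) - (b j + (\<Sum>t<m. W j t * u t))\<bar> < d"
        using \<open>WS * \<eta> < d\<close> by simp
    qed
    then have "\<bar>a j * (\<psi> (b j + (\<Sum>t<m. W j t * u' t)) - \<psi> (b j + (\<Sum>t<m. W j t * u t)))\<bar>
        \<le> \<bar>a j\<bar> * (e / (SA + 1))" if "j < N" for j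
      using that unfolding abs_mult by (intro mult_left_mono) (auto intro: less_imp_le)
    then have "\<bar>\<Sum>j<N. a j * (\<psi> (b j + (\<Sum>t<m. W j t * u' t)) - \<psi> (b j + (\<Sum>t<m. W j t * u t)))\<bar>
        \<le> SA * (e / (SA + 1))"
      unfolding SA_def sum_distrib_right by (intro order.trans[OF sum_abs] sum_mono) auto
    then have "\<bar>shallow_net \<psi> m N c a b W u' - shallow_net \<psi> m N c a b W u\<bar> \<le> SA * (e / (SA + 1))"
      by (simp add: shallow_net_def sum_subtractf right_diff_distrib)
    also have "\<dots> < e" using \<open>SA \<ge> 0\<close> assms(3) by (simp add: field_simps)
    finally show ?thesis .
  qed
  then show ?thesis using \<open>\<eta> > 0\<close> by blast
qed

section \<open>Deep networks\<close>

fun hidden_act :: "(real \<Rightarrow> real) \<Rightarrow> nat list \<Rightarrow> ((nat \<Rightarrow> nat \<Rightarrow> real) \<times> (nat \<Rightarrow> real)) list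
    \<Rightarrow> nat \<Rightarrow> (nat \<Rightarrow> real) \<Rightarrow> (nat \<Rightarrow> real)" where
  "hidden_act \<psi> ds \<theta> 0 x = x"
| "hidden_act \<psi> ds \<theta> (Suc l) x = (\<lambda>i. if i < ds ! Suc l
     then \<psi> (affine_layer (ds ! l) (ds ! Suc l) (fst (\<theta> ! l)) (snd (\<theta> ! l)) (hidden_act \<psi> ds \<theta> l x) i)
     else 0)"

lemma hidden_act_Cons:
  "hidden_act \<psi> (d0 # ds) (Wb # \<theta>) (Suc l) x
    = hidden_act \<psi> ds \<theta> l (\<lambda>i. if i < ds ! 0 then \<psi> (affine_layer d0 (ds ! 0) (fst Wb) (snd Wb) x i) else 0)"
proof (induction l)
  case (Suc l)
  let ?x = "\<lambda>i. if i < ds ! 0 then \<psi> (affine_layer d0 (ds ! 0) (fst Wb) (snd Wb) x i) else 0"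
  have "hidden_act \<psi> (d0 # ds) (Wb # \<theta>) (Suc (Suc l)) x = (\<lambda>i. if i < ds ! Suc l
      then \<psi> (affine_layer (ds ! l) (ds ! Suc l) (fst (\<theta> ! l)) (snd (\<theta> ! l))
        (hidden_act \<psi> (d0 # ds) (Wb # \<theta>) (Suc l) x) i) else 0)"
    by (subst hidden_act.simps(2)) (simp only: nth_Cons_Suc)
  also have "\<dots> = (\<lambda>i. if i < ds ! Suc l
      then \<psi> (affine_layer (ds ! l) (ds ! Suc l) (fst (\<theta> ! l)) (snd (\<theta> ! l))
        (hidden_act \<psi> ds \<theta> l ?x) i) else 0)"
    by (simp only: Suc.IH)
  also have "\<dots> = hidden_act \<psi> ds \<theta> (Suc l) ?x"
    by (simp only: hidden_act.simps(2))
  finally show ?case .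
qed (simp only: hidden_act.simps nth_Cons_0 nth_Cons_Suc)

lemma nn_response_eq_hidden_act:
  assumes "length ds = Suc k" "length \<theta> = k" "1 \<le> k"
  shows "nn_response \<psi> ds \<theta> x = affine_layer (ds ! (k - 1)) (ds ! k) (fst (\<theta> ! (k - 1))) (snd (\<theta> ! (k - 1)))
    (hidden_act \<psi> ds \<theta> (k - 1) x)"
  using assms
proof (induction k arbitrary: ds \<theta> x)
  case (Suc k)
  obtain d0 d1 ds' where ds: "ds = d0 # d1 # ds'"
    using Suc.prems(1) by (metis length_Suc_conv)
  obtain Wb \<theta>' where \<theta>: "\<theta> = Wb # \<theta>'" using Suc.prems(2) by (cases \<theta>) auto
  show ?case
  proof (cases "k = 0")
    case True
    then show ?thesis using Suc.prems ds \<theta> by simp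
  next
    case False
    define x' where "x' = (\<lambda>i. if i < d1 then \<psi> (affine_layer d0 d1 (fst Wb) (snd Wb) x i) else 0)"
    have "ds' \<noteq> []" using Suc.prems(1) ds False by auto
    then have "nn_response \<psi> ds \<theta> x = nn_response \<psi> (d1 # ds') \<theta>' x'"
      by (simp add: ds \<theta> x'_def Let_def)
    also have "\<dots> = affine_layer ((d1 # ds') ! (k - 1)) ((d1 # ds') ! k) (fst (\<theta>' ! (k - 1)))
        (snd (\<theta>' ! (k - 1))) (hidden_act \<psi> (d1 # ds') \<theta>' (k - 1) x')"
      using Suc.IH[of "d1 # ds'" \<theta>' x'] Suc.prems ds \<theta> False by simp
    also have "hidden_act \<psi> (d1 # ds') \<theta>' (k - 1) x' = hidden_act \<psi> ds \<theta> k x"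
      using False by (cases k) (simp_all only: ds \<theta> hidden_act_Cons x'_def nth_Cons_0 diff_Suc_1)
    finally show ?thesis using False ds \<theta> by (cases k) auto
  qed
qed simp

lemma affine_layer_apply: "i < dout \<Longrightarrow> affine_layer din dout W b v i = (\<Sum>j<din. W i j * v j) + b i"
  by (simp add: affine_layer_def)

definition diag_layer :: "nat \<Rightarrow> real \<Rightarrow> real \<Rightarrow> (nat \<Rightarrow> nat \<Rightarrow> real) \<times> (nat \<Rightarrow> real)" where
  "diag_layer d a c = ((\<lambda>i j. if i < d \<and> j = i then a else 0), (\<lambda>i. if i < d then c else 0))"

lemma affine_diag_layer:
  assumes "i < d" "d \<le> din" "d \<le> dout"
  shows "affine_layer din dout (fst (diag_layer d a c)) (snd (diag_layer d a c)) v i = a * v i + c"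
proof -
  have "(\<Sum>j<din. (if i < d \<and> j = i then a else 0) * v j) = (\<Sum>j<din. if i = j then a * v j else 0)"
    using assms(1) by (intro sum.cong) auto
  then show ?thesis using assms by (simp add: affine_layer_apply diag_layer_def)
qed

lemma sum_block:
  fixes f :: "nat \<Rightarrow> real"
  assumes "q * N + N \<le> d"
  shows "(\<Sum>\<nu><d. if q * N \<le> \<nu> \<and> \<nu> < q * N + N then f (\<nu> - q * N) else 0) = (\<Sum>j<N. f j)"
proof -
  have "(\<Sum>\<nu><d. if q * N \<le> \<nu> \<and> \<nu> < q * N + N then f (\<nu> - q * N) else 0) = (\<Sum>\<nu>\<in>{q * N..<q * N + N}. f (\<nu> - q * N))"
    using assms by (subst sum.mono_neutral_right[of "{..<d}" "{q * N..<q * N + N}"]) auto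
  also have "\<dots> = (\<Sum>j<N. f j)"
    by (rule sum.reindex_bij_witness[of _ "\<lambda>j. j + q * N" "\<lambda>\<nu>. \<nu> - q * N"]) auto
  finally show ?thesis .
qed

text \<open>The network of the theorem: layers \<open>1, \<dots>, i\<^sub>0 - 1\<close> relay the input through neurons
  \<open>\<psi>(b\<^sub>0 + s\<^sub>1 z)\<close>, layer \<open>i\<^sub>0\<close> holds one shallow network of width \<open>N\<close> per output coordinate,
  and the layers after it relay the outputs through neurons \<open>\<psi>(b\<^sub>0 + s\<^sub>2 z)\<close>. Each relay
  layer decodes the previous neuron affinely, so the relayed value advances by one application
  of \<open>act_rescaled\<close> per layer.\<close>

locale relay_network =
  fixes \<psi> :: "real \<Rightarrow> real" and ds :: "nat list" and k i0 m r N :: nat and b0 s1 s2 :: real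
    and A BB :: "nat \<Rightarrow> nat \<Rightarrow> real" and Wt :: "nat \<Rightarrow> nat \<Rightarrow> nat \<Rightarrow> real" and C :: "nat \<Rightarrow> real"
  assumes length_ds: "length ds = Suc k" and i0: "1 \<le> i0" "i0 < k"
    and ds_0: "ds ! 0 = m" and ds_k: "ds ! k = r"
    and pre_width: "\<forall>l<i0. m \<le> ds ! l" and wide_width: "r * N \<le> ds ! i0"
    and post_width: "\<forall>l. i0 < l \<and> l \<le> k \<longrightarrow> r \<le> ds ! l"
    and deriv_b0: "deriv \<psi> b0 \<noteq> 0" and s1: "s1 \<noteq> 0" and s2: "s2 \<noteq> 0"
begin

definition relayed_input :: "(nat \<Rightarrow> real) \<Rightarrow> nat \<Rightarrow> real" where
  "relayed_input x t = (act_rescaled \<psi> b0 s1 ^^ (i0 - 1)) (x t)"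

definition subnet :: "nat \<Rightarrow> (nat \<Rightarrow> real) \<Rightarrow> real" where
  "subnet q = shallow_net \<psi> m N (C q) (A q) (BB q) (Wt q)"

definition relay_layer :: "nat \<Rightarrow> (nat \<Rightarrow> nat \<Rightarrow> real) \<times> (nat \<Rightarrow> real)" where
  "relay_layer d = diag_layer d (1 / deriv \<psi> b0) (b0 - \<psi> b0 / deriv \<psi> b0)"

definition in_scale :: real where
  "in_scale = (if i0 = 1 then 1 else 1 / (s1 * deriv \<psi> b0))"

definition in_shift :: real where
  "in_shift = (if i0 = 1 then 0 else - \<psi> b0 / (s1 * deriv \<psi> b0))"

definition wide_layer :: "(nat \<Rightarrow> nat \<Rightarrow> real) \<times> (nat \<Rightarrow> real)" where
  "wide_layer =
    ((\<lambda>\<nu> t. if \<nu> < r * N \<and> t < m then Wt (\<nu> div N) (\<nu> mod N) t * in_scale else 0),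
     (\<lambda>\<nu>. if \<nu> < r * N then BB (\<nu> div N) (\<nu> mod N) + (\<Sum>t<m. Wt (\<nu> div N) (\<nu> mod N) t * in_shift) else 0))"

definition out_scale :: real where
  "out_scale = (if Suc i0 = k then 1 else s2)"

definition out_shift :: real where
  "out_shift = (if Suc i0 = k then 0 else b0)"

definition collect_layer :: "(nat \<Rightarrow> nat \<Rightarrow> real) \<times> (nat \<Rightarrow> real)" where
  "collect_layer =
    ((\<lambda>q \<nu>. if q < r \<and> q * N \<le> \<nu> \<and> \<nu> < q * N + N then out_scale * A q (\<nu> - q * N) else 0),
     (\<lambda>q. if q < r then out_scale * C q + out_shift else 0))"

definition layer :: "nat \<Rightarrow> (nat \<Rightarrow> nat \<Rightarrow> real) \<times> (nat \<Rightarrow> real)" where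
  "layer l =
    (if l < i0 then (if l = 1 then diag_layer m s1 b0 else relay_layer m)
     else if l = i0 then wide_layer
     else if l = Suc i0 then collect_layer
     else if l = k then diag_layer r (1 / (s2 * deriv \<psi> b0)) (- \<psi> b0 / (s2 * deriv \<psi> b0))
     else relay_layer r)"

definition params :: "((nat \<Rightarrow> nat \<Rightarrow> real) \<times> (nat \<Rightarrow> real)) list" where
  "params = map (\<lambda>l. layer (Suc l)) [0..<k]"

abbreviation hidden :: "nat \<Rightarrow> (nat \<Rightarrow> real) \<Rightarrow> nat \<Rightarrow> real" where
  "hidden \<equiv> hidden_act \<psi> ds params"

lemma length_params: "length params = k"
  by (simp add: params_def)

lemma hidden_Suc:
  assumes "l < k" "i < ds ! Suc l"
  shows "hidden (Suc l) x i
    = \<psi> (affine_layer (ds ! l) (ds ! Suc l) (fst (layer (Suc l))) (snd (layer (Suc l))) (hidden l x) i)"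
  using assms by (simp add: params_def)

lemma relay_step:
  "1 / deriv \<psi> b0 * \<psi> (b0 + s * z) + (b0 - \<psi> b0 / deriv \<psi> b0) = b0 + s * act_rescaled \<psi> b0 s z"
  if "s \<noteq> 0"
  using that deriv_b0 by (simp add: act_rescaled_def field_simps)

lemma hidden_pre:
  assumes "1 \<le> l" "l < i0" "t < m"
  shows "hidden l x t = \<psi> (b0 + s1 * (act_rescaled \<psi> b0 s1 ^^ (l - 1)) (x t))"
  using assms
proof (induction l rule: nat_induct_at_least)
  case base
  then have "m \<le> ds ! Suc 0" using pre_width by auto
  then show ?case
    using hidden_Suc[of 0 t x] base i0 ds_0 affine_diag_layer[of t m "ds ! 0" "ds ! Suc 0"]
    by (simp add: layer_def add.commute)
next
  case (Suc l)
  have "m \<le> ds ! l" "m \<le> ds ! Suc l" using pre_width Suc.prems by auto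
  then have "hidden (Suc l) x t = \<psi> (1 / deriv \<psi> b0 * hidden l x t + (b0 - \<psi> b0 / deriv \<psi> b0))"
    using hidden_Suc[of l t x] Suc affine_diag_layer[of t m] i0
    by (simp add: layer_def relay_layer_def)
  also have "\<dots> = \<psi> (b0 + s1 * act_rescaled \<psi> b0 s1 ((act_rescaled \<psi> b0 s1 ^^ (l - 1)) (x t)))"
    using Suc by (simp only: relay_step[OF s1] Suc_lessD)
  also have "\<dots> = \<psi> (b0 + s1 * (act_rescaled \<psi> b0 s1 ^^ (Suc l - 1)) (x t))"
    using Suc.hyps by (cases l) auto
  finally show ?case .
qed

lemma wide_input:
  assumes "t < m"
  shows "in_scale * hidden (i0 - 1) x t + in_shift = (act_rescaled \<psi> b0 s1 ^^ (i0 - 1)) (x t)"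
proof (cases "i0 = 1")
  case False
  then obtain j where "i0 - 1 = Suc j" "i0 - 2 = j" using i0 by (cases "i0 - 1") auto
  then have "(act_rescaled \<psi> b0 s1 ^^ (i0 - 1)) (x t) = act_rescaled \<psi> b0 s1 ((act_rescaled \<psi> b0 s1 ^^ (i0 - 2)) (x t))"
    by simp
  then show ?thesis
    using False i0 assms hidden_pre[of "i0 - 1" t x] s1 deriv_b0
    by (simp add: in_scale_def in_shift_def act_rescaled_def field_simps numeral_2_eq_2)
next
  case True
  then have "in_scale = 1" "in_shift = 0" "i0 - 1 = 0"
    unfolding in_scale_def in_shift_def by simp_all
  then show ?thesis by simp
qed

lemma hidden_wide:
  assumes "\<nu> < r * N"
  shows "hidden i0 x \<nu>
    = \<psi> (BB (\<nu> div N) (\<nu> mod N) + (\<Sum>t<m. Wt (\<nu> div N) (\<nu> mod N) t * relayed_input x t))"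
proof -
  let ?l = "i0 - 1"
  let ?W = "Wt (\<nu> div N) (\<nu> mod N)"
  have l: "Suc ?l = i0" using i0 by simp
  have "m \<le> ds ! ?l" using pre_width i0 by simp
  then have "(\<Sum>j<ds ! ?l. fst wide_layer \<nu> j * hidden ?l x j) = (\<Sum>j<m. ?W j * in_scale * hidden ?l x j)"
    using assms by (intro sum.mono_neutral_cong_right) (auto simp: wide_layer_def)
  then have "affine_layer (ds ! ?l) (ds ! i0) (fst wide_layer) (snd wide_layer) (hidden ?l x) \<nu>
      = BB (\<nu> div N) (\<nu> mod N) + (\<Sum>t<m. ?W t * (in_scale * hidden ?l x t + in_shift))"
    using assms wide_width
    by (simp add: affine_layer_apply wide_layer_def sum.distrib distrib_left mult_ac)
  also have "\<dots> = BB (\<nu> div N) (\<nu> mod N) + (\<Sum>t<m. ?W t * relayed_input x t)"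
    using wide_input by (simp add: relayed_input_def)
  finally show ?thesis
    using hidden_Suc[of ?l \<nu> x, unfolded l] i0 assms wide_width by (simp add: layer_def)
qed

lemma collect_affine:
  assumes "q < r"
  shows "affine_layer (ds ! i0) (ds ! Suc i0) (fst collect_layer) (snd collect_layer) (hidden i0 x) q
    = out_scale * subnet q (relayed_input x) + out_shift"
proof -
  have block: "q * N + N \<le> ds ! i0"
    using assms wide_width by (metis add.commute le_trans mult_Suc mult_le_mono1 Suc_leI)
  have "q < ds ! Suc i0" using post_width[rule_format, of "Suc i0"] i0 assms by simp
  then have "affine_layer (ds ! i0) (ds ! Suc i0) (fst collect_layer) (snd collect_layer) (hidden i0 x) q
      = (\<Sum>\<nu><ds ! i0. fst collect_layer q \<nu> * hidden i0 x \<nu>) + (out_scale * C q + out_shift)"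
    using assms by (simp add: affine_layer_apply collect_layer_def)
  also have "(\<Sum>\<nu><ds ! i0. fst collect_layer q \<nu> * hidden i0 x \<nu>)
      = (\<Sum>\<nu><ds ! i0. if q * N \<le> \<nu> \<and> \<nu> < q * N + N
           then out_scale * A q (\<nu> - q * N) * hidden i0 x (q * N + (\<nu> - q * N)) else 0)"
    using assms by (intro sum.cong refl) (auto simp: collect_layer_def)
  also have "\<dots> = (\<Sum>j<N. out_scale * A q j * hidden i0 x (q * N + j))"
    by (rule sum_block[OF block])
  also have "\<dots> = out_scale * (\<Sum>j<N. A q j * \<psi> (BB q j + (\<Sum>t<m. Wt q j t * relayed_input x t)))"
  proof -
    have "hidden i0 x (q * N + j) = \<psi> (BB q j + (\<Sum>t<m. Wt q j t * relayed_input x t))" if "j < N" for j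
    proof -
      have "q * N + j < r * N"
        using assms that by (metis add_less_cancel_left less_le_trans mult_Suc mult_le_mono1 Suc_leI add.commute)
      then show ?thesis using hidden_wide that by simp
    qed
    then show ?thesis by (simp add: sum_distrib_left mult_ac)
  qed
  finally show ?thesis by (simp add: subnet_def shallow_net_def distrib_left)
qed

lemma hidden_post:
  assumes "Suc i0 \<le> l" "l < k" "q < r"
  shows "hidden l x q = \<psi> (b0 + s2 * (act_rescaled \<psi> b0 s2 ^^ (l - Suc i0)) (subnet q (relayed_input x)))"
  using assms
proof (induction l rule: nat_induct_at_least)
  case base
  then have "out_scale = s2" "out_shift = b0" unfolding out_scale_def out_shift_def by simp_all
  moreover have "q < ds ! Suc i0" using post_width[rule_format, of "Suc i0"] base by simp
  ultimately show ?case
    using base hidden_Suc[of i0 q x] collect_affine[of q x] by (simp add: layer_def add.commute)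
next
  case (Suc l)
  have "r \<le> ds ! l" "r \<le> ds ! Suc l" using post_width Suc by auto
  then have "hidden (Suc l) x q = \<psi> (1 / deriv \<psi> b0 * hidden l x q + (b0 - \<psi> b0 / deriv \<psi> b0))"
    using hidden_Suc[of l q x] Suc affine_diag_layer[of q r]
    by (simp add: layer_def relay_layer_def)
  also have "\<dots> = \<psi> (b0 + s2 * act_rescaled \<psi> b0 s2
      ((act_rescaled \<psi> b0 s2 ^^ (l - Suc i0)) (subnet q (relayed_input x))))"
    using Suc by (simp only: relay_step[OF s2] Suc_lessD)
  also have "\<dots> = \<psi> (b0 + s2 * (act_rescaled \<psi> b0 s2 ^^ (Suc l - Suc i0)) (subnet q (relayed_input x)))"
  proof -
    have "Suc l - Suc i0 = Suc (l - Suc i0)" using Suc.hyps by simp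
    then show ?thesis by simp
  qed
  finally show ?case .
qed

lemma nn_response_params:
  assumes "q < r"
  shows "nn_response \<psi> ds params x q = (act_rescaled \<psi> b0 s2 ^^ (k - 1 - i0)) (subnet q (relayed_input x))"
proof -
  have "nn_response \<psi> ds params x q
      = affine_layer (ds ! (k - 1)) (ds ! k) (fst (layer k)) (snd (layer k)) (hidden (k - 1) x) q"
    using nn_response_eq_hidden_act[OF length_ds length_params] i0 by (simp add: params_def)
  also have "\<dots> = (act_rescaled \<psi> b0 s2 ^^ (k - 1 - i0)) (subnet q (relayed_input x))"
  proof (cases "k = Suc i0")
    case True
    then have "layer k = collect_layer" "k - 1 = i0" "k - 1 - i0 = 0" "ds ! k = ds ! Suc i0"
      "out_scale = 1" "out_shift = 0"
      unfolding layer_def out_scale_def out_shift_def by auto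
    then show ?thesis using collect_affine[OF assms] by (simp only: funpow_0 mult_1_left add_0_right)
  next
    case False
    then have "Suc i0 \<le> k - 1" "r \<le> ds ! (k - 1)" using i0 post_width by auto
    moreover have "k - 1 - i0 = Suc (k - 1 - Suc i0)" using False i0 by simp
    ultimately show ?thesis
      using False i0 assms ds_k hidden_post[of "k - 1" q x] affine_diag_layer[of q r "ds ! (k - 1)" "ds ! k"]
      by (simp add: layer_def act_rescaled_def diff_divide_distrib)
  qed
  finally show ?thesis .
qed

end

section \<open>Approximation on compact sets\<close>

lemma abs_poly_eval_le:
  assumes "\<forall>t<m. \<bar>x t\<bar> \<le> R"
  shows "\<bar>poly_eval m n cf x\<bar> \<le> poly_eval m n (\<lambda>\<alpha>. \<bar>cf \<alpha>\<bar>) (\<lambda>_. \<bar>R\<bar>)"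
proof -
  have "\<bar>\<Prod>i<m. x i ^ \<alpha> i\<bar> \<le> (\<Prod>i<m. \<bar>R\<bar> ^ \<alpha> i)" for \<alpha>
    unfolding abs_prod power_abs using assms by (intro prod_mono conjI power_mono) auto
  then show ?thesis
    by (intro order.trans[OF sum_abs] sum_mono) (auto simp: abs_mult intro!: mult_left_mono)
qed

lemma poly_family_bounded:
  fixes cf :: "nat \<Rightarrow> (nat \<Rightarrow> nat) \<Rightarrow> real"
  shows "\<exists>P \<ge> 0. \<forall>q<r. \<forall>x. (\<forall>t<m. \<bar>x t\<bar> \<le> R) \<longrightarrow> \<bar>poly_eval m n (cf q) x\<bar> \<le> P"
proof (intro exI conjI allI impI)
  let ?P = "\<Sum>q<r. poly_eval m n (\<lambda>\<alpha>. \<bar>cf q \<alpha>\<bar>) (\<lambda>_. \<bar>R\<bar>)"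
  show "?P \<ge> 0" by (auto intro!: sum_nonneg mult_nonneg_nonneg prod_nonneg)
  fix q x assume "q < r" "\<forall>t<m. \<bar>x t\<bar> \<le> R"
  then have "\<bar>poly_eval m n (cf q) x\<bar> \<le> poly_eval m n (\<lambda>\<alpha>. \<bar>cf q \<alpha>\<bar>) (\<lambda>_. \<bar>R\<bar>)"
    by (intro abs_poly_eval_le)
  also have "\<dots> \<le> ?P"
    using \<open>q < r\<close> by (intro member_le_sum) (simp_all add: sum_nonneg prod_nonneg)
  finally show "\<bar>poly_eval m n (cf q) x\<bar> \<le> ?P" .
qed

lemma constant_network:
  assumes "length ds = Suc k" "1 \<le> k"
  shows "\<exists>\<theta>. length \<theta> = k \<and> (\<forall>x q. q < ds ! k \<longrightarrow> nn_response \<psi> ds \<theta> x q = v q)"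
proof -
  define \<theta> where "\<theta> = replicate k ((\<lambda>_ _. 0) :: nat \<Rightarrow> nat \<Rightarrow> real, v)"
  have "nn_response \<psi> ds \<theta> x q = v q" if "q < ds ! k" for x q
    using nn_response_eq_hidden_act[OF assms(1) _ assms(2), of \<theta>] assms that
    by (simp add: \<theta>_def affine_layer_apply)
  then show ?thesis by (intro exI[of _ \<theta>]) (simp add: \<theta>_def)
qed

lemma shallow_family_approx:
  fixes cf :: "nat \<Rightarrow> (nat \<Rightarrow> nat) \<Rightarrow> real" and m :: nat
  assumes psi: "C_n n \<psi>" "1 \<le> n" and b: "\<And>j. 1 \<le> j \<Longrightarrow> j \<le> n \<Longrightarrow> (deriv ^^ j) \<psi> b \<noteq> 0"
    and "0 < r" "R > 0" "e > 0"
  defines "N \<equiv> card (nonlinear_indices m n) + 1"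
  shows "\<exists>\<eta>>0. \<exists>C A BB Wt.
    (\<forall>q u. (\<forall>t<m. \<bar>u t\<bar> \<le> R + 1) \<longrightarrow>
      \<bar>shallow_net \<psi> m N (C q) (A q) (BB q) (Wt q) u - poly_eval m n (cf q) u\<bar> < e) \<and>
    (\<forall>q u u'. q < r \<longrightarrow> (\<forall>t<m. \<bar>u t\<bar> \<le> R) \<longrightarrow> (\<forall>t<m. \<bar>u' t - u t\<bar> \<le> \<eta>) \<longrightarrow>
      \<bar>shallow_net \<psi> m N (C q) (A q) (BB q) (Wt q) u' - shallow_net \<psi> m N (C q) (A q) (BB q) (Wt q) u\<bar> < e)"
proof -
  define approximates where "approximates q C A BB Wt \<longleftrightarrow> (\<forall>u. (\<forall>t<m. \<bar>u t\<bar> \<le> R + 1) \<longrightarrow>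
      \<bar>shallow_net \<psi> m N C A BB Wt u - poly_eval m n (cf q) u\<bar> < e)" for q C A BB Wt
  have "\<exists>C A BB Wt. approximates q C A BB Wt" for q
    using shallow_approx[where R = "R + 1" and m = m and cf = "cf q", OF psi b _ \<open>e > 0\<close>] \<open>R > 0\<close>
    unfolding N_def approximates_def by simp
  then obtain C A BB Wt where "\<forall>q. approximates q (C q) (A q) (BB q) (Wt q)"
    by metis
  then have approx: "\<bar>shallow_net \<psi> m N (C q) (A q) (BB q) (Wt q) u - poly_eval m n (cf q) u\<bar> < e"
    if "\<forall>t<m. \<bar>u t\<bar> \<le> R + 1" for q u
    using that unfolding approximates_def by blast
  have "\<exists>\<eta>>0. \<forall>u u'. (\<forall>t<m. \<bar>u t\<bar> \<le> R) \<longrightarrow> (\<forall>t<m. \<bar>u' t - u t\<bar> \<le> \<eta>) \<longrightarrow>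
      \<bar>shallow_net \<psi> m N (C q) (A q) (BB q) (Wt q) u' - shallow_net \<psi> m N (C q) (A q) (BB q) (Wt q) u\<bar> < e"
    for q
    using shallow_net_uniform_continuity[OF C_n_continuous[OF psi(1)]] \<open>R > 0\<close> \<open>e > 0\<close> by simp
  then obtain \<eta> where \<eta>: "\<forall>q. \<eta> q > 0 \<and> (\<forall>u u'. (\<forall>t<m. \<bar>u t\<bar> \<le> R) \<longrightarrow> (\<forall>t<m. \<bar>u' t - u t\<bar> \<le> \<eta> q) \<longrightarrow>
      \<bar>shallow_net \<psi> m N (C q) (A q) (BB q) (Wt q) u' - shallow_net \<psi> m N (C q) (A q) (BB q) (Wt q) u\<bar> < e)"
    by (metis choice)
  define \<eta>0 where "\<eta>0 = Min (\<eta> ` {..<r})"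
  have "\<eta>0 > 0" and \<eta>0_le: "\<And>q. q < r \<Longrightarrow> \<eta>0 \<le> \<eta> q"
    using \<eta> \<open>0 < r\<close> unfolding \<eta>0_def by (subst Min_gr_iff) auto
  have "\<bar>shallow_net \<psi> m N (C q) (A q) (BB q) (Wt q) u' - shallow_net \<psi> m N (C q) (A q) (BB q) (Wt q) u\<bar> < e"
    if q: "q < r" and u: "\<forall>t<m. \<bar>u t\<bar> \<le> R" and u': "\<forall>t<m. \<bar>u' t - u t\<bar> \<le> \<eta>0" for q u u'
  proof -
    have "\<forall>t<m. \<bar>u' t - u t\<bar> \<le> \<eta> q" using u' \<eta>0_le[OF q] by force
    then show ?thesis using \<eta> u by blast
  qed
  then show ?thesis using \<open>\<eta>0 > 0\<close> approx by blast
qed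

lemma deep_approx_on_cube:
  fixes c :: "(nat \<Rightarrow> nat) \<Rightarrow> nat \<Rightarrow> real"
  assumes psi: "C_n n \<psi>" "(deriv ^^ n) \<psi> x0 \<noteq> 0" "1 \<le> n"
    and ds: "length ds = Suc k" "ds ! 0 = m" "ds ! k = r" "0 < r"
    and i0: "0 < i0" "i0 < k" "int r * (int ((n + m) choose m) - int m) \<le> int (ds ! i0)"
      "\<forall>l<i0. m \<le> ds ! l" "\<forall>l. i0 < l \<and> l \<le> k \<longrightarrow> r \<le> ds ! l"
    and "R > 0" "\<epsilon> > 0"
  shows "\<exists>\<theta>. length \<theta> = k \<and> (\<forall>x. (\<forall>t<m. \<bar>x t\<bar> \<le> R) \<longrightarrow>
           (\<forall>q<r. \<bar>nn_response \<psi> ds \<theta> x q - poly_map m r n c x q\<bar> < \<epsilon>))"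
proof -
  define e where "e = min \<epsilon> 1 / 3"
  have "e > 0" "3 * e \<le> \<epsilon>" "2 * e \<le> 1" using \<open>\<epsilon> > 0\<close> by (auto simp: e_def)
  obtain b0 where b0: "\<And>j. 1 \<le> j \<Longrightarrow> j \<le> n \<Longrightarrow> (deriv ^^ j) \<psi> b0 \<noteq> 0"
    using C_n_derivs_nonzero_at[OF psi] by blast
  then have "deriv \<psi> b0 \<noteq> 0" using b0[of 1] \<open>1 \<le> n\<close> by simp
  let ?N = "card (nonlinear_indices m n) + 1"
  have "?N + m = (n + m) choose m" using card_nonlinear_indices[OF \<open>1 \<le> n\<close>, of m] by simp
  then have "int ?N = int ((n + m) choose m) - int m" by linarith
  then have "int (r * ?N) = int r * (int ((n + m) choose m) - int m)"
    by (simp only: of_nat_mult)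
  then have "r * ?N \<le> ds ! i0" using i0(3) by linarith
  define cf where "cf q \<alpha> = c \<alpha> q" for q \<alpha>
  obtain \<eta>0 C A BB Wt where "\<eta>0 > 0"
    and shallow: "\<forall>q u. (\<forall>t<m. \<bar>u t\<bar> \<le> R + 1) \<longrightarrow>
      \<bar>shallow_net \<psi> m ?N (C q) (A q) (BB q) (Wt q) u - poly_eval m n (cf q) u\<bar> < e"
    and modulus: "\<forall>q u u'. q < r \<longrightarrow> (\<forall>t<m. \<bar>u t\<bar> \<le> R) \<longrightarrow> (\<forall>t<m. \<bar>u' t - u t\<bar> \<le> \<eta>0) \<longrightarrow>
      \<bar>shallow_net \<psi> m ?N (C q) (A q) (BB q) (Wt q) u' - shallow_net \<psi> m ?N (C q) (A q) (BB q) (Wt q) u\<bar> < e"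
    using shallow_family_approx[where m = m and cf = cf, OF psi(1,3) b0 \<open>0 < r\<close> \<open>R > 0\<close> \<open>e > 0\<close>]
    by blast
  obtain s1 where "s1 > 0"
    and pre_chain: "\<forall>t. \<bar>t\<bar> \<le> R \<longrightarrow> \<bar>(act_rescaled \<psi> b0 s1 ^^ (i0 - 1)) t - t\<bar> \<le> \<eta>0"
    using act_rescaled_funpow_approx_id[where M = R and L = "i0 - 1",
        OF psi(1,3) \<open>deriv \<psi> b0 \<noteq> 0\<close> _ \<open>\<eta>0 > 0\<close>] \<open>R > 0\<close> by auto
  obtain P where "P \<ge> 0" and P: "\<forall>q<r. \<forall>x. (\<forall>t<m. \<bar>x t\<bar> \<le> R) \<longrightarrow> \<bar>poly_eval m n (cf q) x\<bar> \<le> P"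
    using poly_family_bounded by blast
  obtain s2 where "s2 > 0"
    and post_chain: "\<forall>t. \<bar>t\<bar> \<le> P + 1 \<longrightarrow> \<bar>(act_rescaled \<psi> b0 s2 ^^ (k - 1 - i0)) t - t\<bar> \<le> e"
    using act_rescaled_funpow_approx_id[where M = "P + 1" and L = "k - 1 - i0",
        OF psi(1,3) \<open>deriv \<psi> b0 \<noteq> 0\<close> _ \<open>e > 0\<close>] \<open>P \<ge> 0\<close> by auto
  interpret relay_network \<psi> ds k i0 m r ?N b0 s1 s2 A BB Wt C
    using ds i0 \<open>r * ?N \<le> ds ! i0\<close> \<open>deriv \<psi> b0 \<noteq> 0\<close> \<open>s1 > 0\<close> \<open>s2 > 0\<close> by unfold_locales auto
  have "\<bar>nn_response \<psi> ds params x q - poly_map m r n c x q\<bar> < \<epsilon>"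
    if x: "\<forall>t<m. \<bar>x t\<bar> \<le> R" and q: "q < r" for x q
  proof -
    have "\<forall>t<m. \<bar>relayed_input x t - x t\<bar> \<le> \<eta>0"
      using pre_chain x unfolding relayed_input_def by blast
    then have "\<bar>subnet q (relayed_input x) - subnet q x\<bar> < e"
      using modulus q x unfolding subnet_def by blast
    moreover have "\<forall>t<m. \<bar>x t\<bar> \<le> R + 1" using x by (simp add: add_increasing2)
    then have "\<bar>subnet q x - poly_eval m n (cf q) x\<bar> < e"
      using shallow unfolding subnet_def by blast
    ultimately have close: "\<bar>subnet q (relayed_input x) - poly_eval m n (cf q) x\<bar> < 2 * e" by linarith
    then have "\<bar>subnet q (relayed_input x)\<bar> \<le> P + 1" using P q x \<open>2 * e \<le> 1\<close> by fastforce
    then have "\<bar>nn_response \<psi> ds params x q - subnet q (relayed_input x)\<bar> \<le> e"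
      using post_chain nn_response_params[OF q] by simp
    moreover have "poly_map m r n c x q = poly_eval m n (cf q) x"
      using q by (simp add: poly_map_def cf_def)
    ultimately show ?thesis using close \<open>3 * e \<le> \<epsilon>\<close> by linarith
  qed
  then show ?thesis using length_params by blast
qed

lemma approx_on_cube:
  fixes c :: "(nat \<Rightarrow> nat) \<Rightarrow> nat \<Rightarrow> real"
  assumes psi: "C_n n \<psi>" "\<exists>x. (deriv ^^ n) \<psi> x \<noteq> 0"
    and ds: "length ds = Suc k" "ds ! 0 = m" "ds ! k = r" "0 < r"
    and i0: "0 < i0" "i0 < k" "int r * (int ((n + m) choose m) - int m) \<le> int (ds ! i0)"
      "\<forall>l<i0. m \<le> ds ! l" "\<forall>l. i0 < l \<and> l \<le> k \<longrightarrow> r \<le> ds ! l"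
    and "R > 0" "\<epsilon> > 0"
  shows "\<exists>\<theta>. length \<theta> = k \<and> (\<forall>x. (\<forall>t<m. \<bar>x t\<bar> \<le> R) \<longrightarrow>
           (\<forall>q<r. \<bar>nn_response \<psi> ds \<theta> x q - poly_map m r n c x q\<bar> < \<epsilon>))"
proof (cases "n = 0")
  case True
  then have "poly_map m r n c x q = c (\<lambda>_. 0) q" if "q < r" for x q
    using that by (simp add: poly_map_def multi_indices_0)
  then show ?thesis
    using constant_network[OF ds(1), of \<psi> "\<lambda>q. c (\<lambda>_. 0) q"] ds i0 \<open>\<epsilon> > 0\<close> by auto
next
  case False
  then show ?thesis
    using deep_approx_on_cube[OF psi(1) _ _ ds i0 \<open>R > 0\<close> \<open>\<epsilon> > 0\<close>] psi(2) by auto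
qed

lemma compact_bounded_coordinates:
  fixes K :: "(nat \<Rightarrow> real) set"
  assumes "compact K"
  shows "\<exists>R. \<forall>x\<in>K. \<forall>t<m. \<bar>x t\<bar> \<le> R"
proof -
  have "bounded ((\<lambda>x. x t) ` K)" for t
    by (intro compact_imp_bounded compact_continuous_image[OF _ assms]
        continuous_on_subset[OF continuous_on_product_coordinates]) simp_all
  then obtain B where B: "\<forall>t. \<forall>x\<in>K. \<bar>x t\<bar> \<le> B t"
    unfolding bounded_iff by (metis image_eqI real_norm_def)
  have "\<bar>x t\<bar> \<le> (\<Sum>t<m. \<bar>B t\<bar>)" if "x \<in> K" "t < m" for x t
  proof -
    have "\<bar>x t\<bar> \<le> \<bar>B t\<bar>" using B that(1) abs_ge_self order.trans by blast
    also have "\<dots> \<le> (\<Sum>t<m. \<bar>B t\<bar>)" using that(2) by (intro member_le_sum) auto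
    finally show ?thesis .
  qed
  then show ?thesis by blast
qed

lemma uniform_limit_on_compact_from_cubes:
  fixes f :: "nat \<Rightarrow> (nat \<Rightarrow> real) \<Rightarrow> nat \<Rightarrow> real"
  assumes approx: "\<And>j x q. \<forall>t<m. \<bar>x t\<bar> \<le> real j + 1 \<Longrightarrow> q < r \<Longrightarrow> \<bar>f j x q - g x q\<bar> < 1 / (real j + 1)"
    and "compact K" "\<epsilon> > 0"
  shows "\<exists>J. \<forall>j\<ge>J. \<forall>x\<in>K. \<forall>q<r. \<bar>f j x q - g x q\<bar> < \<epsilon>"
proof -
  obtain R where R: "\<forall>x\<in>K. \<forall>t<m. \<bar>x t\<bar> \<le> R" using compact_bounded_coordinates[OF \<open>compact K\<close>] by blast
  define J where "J = nat \<lceil>max R (1 / \<epsilon>)\<rceil>"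
  have "\<bar>f j x q - g x q\<bar> < \<epsilon>" if "J \<le> j" "x \<in> K" "q < r" for j x q
  proof -
    have "R \<le> real j" "1 / \<epsilon> \<le> real j" using that(1) unfolding J_def by linarith+
    then have "\<forall>t<m. \<bar>x t\<bar> \<le> real j + 1" "1 / (real j + 1) < \<epsilon>"
      using R that(2) \<open>\<epsilon> > 0\<close> by (fastforce, simp add: field_simps)
    then show ?thesis using approx[of x j q] that(3) by simp
  qed
  then show ?thesis by blast
qed

theorem theoremD4:
  fixes n m r k :: nat
    and \<psi> :: "real \<Rightarrow> real"
    and c :: "(nat \<Rightarrow> nat) \<Rightarrow> nat \<Rightarrow> real"
    and ds :: "nat list"
  assumes psi_Cn: "C_n n \<psi>"
    and psi_nz: "\<exists>x. (deriv ^^ n) \<psi> x \<noteq> 0"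
    and len: "length ds = k + 1"
    and pos: "\<forall>l\<le>k. ds ! l > 0"
    and d0: "ds ! 0 = m"
    and dk: "ds ! k = r"
    and hidden: "\<exists>i. 0 < i \<and> i < k
                   \<and> int (ds ! i) \<ge> int r * (int ((n + m) choose m) - int m)
                   \<and> (\<forall>l<i. ds ! l \<ge> ds ! 0)
                   \<and> (\<forall>l. i < l \<and> l \<le> k \<longrightarrow> ds ! l \<ge> ds ! k)"
  shows "\<exists>\<theta> :: nat \<Rightarrow> ((nat \<Rightarrow> nat \<Rightarrow> real) \<times> (nat \<Rightarrow> real)) list.
           (\<forall>j. length (\<theta> j) = k) \<and>
           (\<forall>K. compact K \<and> K \<subseteq> euclid m \<longrightarrow>
              (\<forall>\<epsilon>>0. \<exists>J. \<forall>j\<ge>J. \<forall>x\<in>K. \<forall>q<r.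
                 \<bar>nn_response \<psi> ds (\<theta> j) x q - poly_map m r n c x q\<bar> < \<epsilon>))"
proof -
  obtain i0 where i0: "0 < i0" "i0 < k" "int r * (int ((n + m) choose m) - int m) \<le> int (ds ! i0)"
    "\<forall>l<i0. m \<le> ds ! l" "\<forall>l. i0 < l \<and> l \<le> k \<longrightarrow> r \<le> ds ! l"
    using hidden d0 dk by auto
  have ds: "length ds = Suc k" "ds ! 0 = m" "ds ! k = r" "0 < r" using len d0 dk pos by auto
  have "\<forall>j. \<exists>\<theta>. length \<theta> = k \<and> (\<forall>x. (\<forall>t<m. \<bar>x t\<bar> \<le> real j + 1) \<longrightarrow>
      (\<forall>q<r. \<bar>nn_response \<psi> ds \<theta> x q - poly_map m r n c x q\<bar> < 1 / (real j + 1)))"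
    by (intro allI approx_on_cube[OF psi_Cn psi_nz ds i0]) simp_all
  then obtain \<Theta> where \<Theta>: "\<forall>j. length (\<Theta> j) = k \<and> (\<forall>x. (\<forall>t<m. \<bar>x t\<bar> \<le> real j + 1) \<longrightarrow>
      (\<forall>q<r. \<bar>nn_response \<psi> ds (\<Theta> j) x q - poly_map m r n c x q\<bar> < 1 / (real j + 1)))"
    by (rule choice[THEN exE])
  show ?thesis
  proof (intro exI[of _ \<Theta>] conjI allI impI)
    show "length (\<Theta> j) = k" for j using \<Theta> by blast
    show "\<exists>J. \<forall>j\<ge>J. \<forall>x\<in>K. \<forall>q<r. \<bar>nn_response \<psi> ds (\<Theta> j) x q - poly_map m r n c x q\<bar> < \<epsilon>"
      if "compact K \<and> K \<subseteq> euclid m" "\<epsilon> > 0" for K \<epsilon>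
      using that \<Theta> by (intro uniform_limit_on_compact_from_cubes[where m = m]) auto
  qed
qed

end
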